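(* Assume (A1), (A2) and (A5). Let $V$ be a uniformly random vertex of $G^*(n,\mathbf d)$ and $\mathcal C(V)$ its component. Then there exist $c>0$, $\varepsilon>0$ and $C<\infty$ such that for all $n$, $P(e(\mathcal C(V))=\ell)\le Ce^{-c\ell}$ for $0\le\ell\le\varepsilon n$, and $P(|\mathcal C(V)|=k)\le Ce^{-ck}$ for $1\le k\le\varepsilon n$.
   Context: For each $n\ge1$ a degree sequence $\mathbf d=(d_1,\dots,d_n)$ of non-negative integers is given, with even sum. $G^*(n,\mathbf d)$ is the configuration-model multigraph on $v_1,\dots,v_n$: $v_i$ receives $d_i$ half-edges, a uniformly random perfect matching of all half-edges gives the edges (loops and multiple edges allowed). $n_k:=|\{i:d_i=k\}|$, $D_n$ with $P(D_n=k)=n_k/n$. (A1) there is a probability distribution $(p_k)$ with $n_k/n\to p_k$ for all $k$ and $\mu:=\sum_kkp_k\in(0,\infty)$; $D$ has $P(D=k)=p_k$. (A2) $E D_n\to\mu$. (A5) $E D(D-2)>0$. $e(\cdot)$ and $|\cdot|$ denote numbers of edges and vertices. *)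

theory Defs
  imports "HOL-Probability.Probability"
begin

text \<open>The multigraph G*(n,d) is given by a uniformly random perfect matching.\<close>

definition half_edges :: "nat \<Rightarrow> (nat \<Rightarrow> nat) \<Rightarrow> (nat \<times> nat) set" where
  "half_edges n dn = {(i, j). i < n \<and> j < dn i}"

definition perfect_matchings ::
  "nat \<Rightarrow> (nat \<Rightarrow> nat) \<Rightarrow> ((nat \<times> nat) \<Rightarrow> (nat \<times> nat)) set" where
  "perfect_matchings n dn =
     {m. (\<forall>h \<in> half_edges n dn. m h \<in> half_edges n dn \<and> m h \<noteq> h \<and> m (m h) = h)
         \<and> (\<forall>h. h \<notin> half_edges n dn \<longrightarrow> m h = h)}"

definition config_model :: "nat \<Rightarrow> (nat \<Rightarrow> nat) \<Rightarrow> ((nat \<times> nat) \<Rightarrow> (nat \<times> nat)) pmf" where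
  "config_model n dn = pmf_of_set (perfect_matchings n dn)"

definition cm_edges ::
  "nat \<Rightarrow> (nat \<Rightarrow> nat) \<Rightarrow> ((nat \<times> nat) \<Rightarrow> (nat \<times> nat)) \<Rightarrow> (nat \<times> nat) set set" where
  "cm_edges n dn m = {{h, m h} | h. h \<in> half_edges n dn}"

definition cm_adj :: "nat \<Rightarrow> (nat \<Rightarrow> nat) \<Rightarrow> ((nat \<times> nat) \<Rightarrow> (nat \<times> nat)) \<Rightarrow> (nat \<times> nat) set" where
  "cm_adj n dn m = {(fst h, fst (m h)) | h. h \<in> half_edges n dn}"

definition component :: "nat \<Rightarrow> (nat \<Rightarrow> nat) \<Rightarrow> ((nat \<times> nat) \<Rightarrow> (nat \<times> nat)) \<Rightarrow> nat \<Rightarrow> nat set" where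
  "component n dn m v = {w. (v, w) \<in> (cm_adj n dn m)\<^sup>*}"

definition component_edges ::
  "nat \<Rightarrow> (nat \<Rightarrow> nat) \<Rightarrow> ((nat \<times> nat) \<Rightarrow> (nat \<times> nat)) \<Rightarrow> nat \<Rightarrow> (nat \<times> nat) set set" where
  "component_edges n dn m v = {e \<in> cm_edges n dn m. \<forall>h \<in> e. fst h \<in> component n dn m v}"

definition cm_with_vertex ::
  "nat \<Rightarrow> (nat \<Rightarrow> nat) \<Rightarrow> (((nat \<times> nat) \<Rightarrow> (nat \<times> nat)) \<times> nat) pmf" where
  "cm_with_vertex n dn = pair_pmf (config_model n dn) (pmf_of_set {..<n})"

end

theory Submission
  imports Defs
begin

text \<open>Explore the component of a vertex by repeatedly pairing an active half-edge with its
  partner in the uniform matching, and give the run a weight \<open>w > 1\<close> per discovered vertex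
  (or per explored edge).  Assumption (A5) provides \<open>x < 1\<close> with \<open>E[D x\<^bsup>D\<^esup>] < x\<^sup>2 E[D]\<close>, and
  then, as long as at most \<open>\<epsilon> n\<close> vertices are explored, \<open>x\<close> to the number of active half-edges
  times the accumulated weight is a supermartingale for suitable \<open>w > 1\<close> and \<open>\<epsilon> > 0\<close>.  So the
  expected final weight is at most \<open>1\<close>; as a component with \<open>\<ell>\<close> edges or \<open>k\<close> vertices ends
  the exploration with weight \<open>w\<^sup>\<ell>\<close> resp. \<open>w\<^bsup>k - 1\<^esup>\<close>, these events have probability at
  most \<open>w\<^bsup>-\<ell>\<^esup>\<close> resp. \<open>w\<^bsup>1 - k\<^esup>\<close>.\<close>

section \<open>Perfect matchings of a finite set\<close>

definition perfect_matchings_on :: "'a set \<Rightarrow> ('a \<Rightarrow> 'a) set" where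
  "perfect_matchings_on H =
     {m. (\<forall>h \<in> H. m h \<in> H \<and> m h \<noteq> h \<and> m (m h) = h) \<and> (\<forall>h. h \<notin> H \<longrightarrow> m h = h)}"

lemma perfect_matchings_eq_on: "perfect_matchings n dn = perfect_matchings_on (half_edges n dn)"
  unfolding perfect_matchings_def perfect_matchings_on_def by simp

lemma finite_perfect_matchings_on:
  assumes "finite H"
  shows "finite (perfect_matchings_on H)"
proof -
  have "inj_on (\<lambda>m. restrict m H) (perfect_matchings_on H)"
  proof (rule inj_onI)
    fix m m' assume "m \<in> perfect_matchings_on H" "m' \<in> perfect_matchings_on H"
      and "restrict m H = restrict m' H"
    then show "m = m'"
      unfolding perfect_matchings_on_def by (auto simp: fun_eq_iff restrict_def) metis
  qed
  moreover have "(\<lambda>m. restrict m H) ` perfect_matchings_on H \<subseteq> H \<rightarrow>\<^sub>E H"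
    unfolding perfect_matchings_on_def by auto
  moreover have "finite (H \<rightarrow>\<^sub>E H)"
    using assms by (simp add: finite_PiE)
  ultimately show ?thesis
    by (meson finite_imageD finite_subset)
qed

definition match_pair :: "('a \<Rightarrow> 'a) \<Rightarrow> 'a \<Rightarrow> 'a \<Rightarrow> 'a \<Rightarrow> 'a" where
  "match_pair m a b = m(a := b, b := a)"

lemma match_pair_first: "a \<noteq> b \<Longrightarrow> match_pair m a b a = b"
  by (simp add: match_pair_def)

lemma perfect_matchings_on_decomp:
  assumes "a \<in> H"
  shows "perfect_matchings_on H =
    (\<Union>b \<in> H - {a}. (\<lambda>m'. match_pair m' a b) ` perfect_matchings_on (H - {a, b}))"
proof
  show "perfect_matchings_on H \<subseteq>
    (\<Union>b \<in> H - {a}. (\<lambda>m'. match_pair m' a b) ` perfect_matchings_on (H - {a, b}))"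
  proof
    fix m assume m: "m \<in> perfect_matchings_on H"
    define b where "b = m a"
    have inv: "\<And>h. h \<in> H \<Longrightarrow> m h \<in> H \<and> m h \<noteq> h \<and> m (m h) = h"
      using m unfolding perfect_matchings_on_def by auto
    then have b: "b \<in> H - {a}" "m b = a"
      using assms unfolding b_def by auto
    have "m(a := a, b := b) \<in> perfect_matchings_on (H - {a, b})"
      using m b inv unfolding perfect_matchings_on_def by auto metis+
    moreover have "m = match_pair (m(a := a, b := b)) a b"
      using b unfolding match_pair_def b_def by (auto simp: fun_eq_iff)
    ultimately show "m \<in> (\<Union>b \<in> H - {a}. (\<lambda>m'. match_pair m' a b) ` perfect_matchings_on (H - {a, b}))"
      using b by blast
  qed
next
  show "(\<Union>b \<in> H - {a}. (\<lambda>m'. match_pair m' a b) ` perfect_matchings_on (H - {a, b}))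
    \<subseteq> perfect_matchings_on H"
  proof (rule subsetI)
    fix mm
    assume "mm \<in> (\<Union>b \<in> H - {a}. (\<lambda>m'. match_pair m' a b) ` perfect_matchings_on (H - {a, b}))"
    then obtain b m' where b: "b \<in> H" "b \<noteq> a" and m': "m' \<in> perfect_matchings_on (H - {a, b})"
      and mm: "mm = match_pair m' a b"
      by blast
    have m'H: "\<forall>h \<in> H - {a, b}. m' h \<in> H - {a, b} \<and> m' h \<noteq> h \<and> m' (m' h) = h"
      "\<forall>h. h \<notin> H - {a, b} \<longrightarrow> m' h = h"
      using m' unfolding perfect_matchings_on_def by auto
    show "mm \<in> perfect_matchings_on H"
      unfolding perfect_matchings_on_def match_pair_def mm
    proof (intro CollectI conjI ballI allI impI)
      fix h assume "h \<in> H"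
      then show "(m'(a := b, b := a)) h \<in> H" "(m'(a := b, b := a)) h \<noteq> h"
        "(m'(a := b, b := a)) ((m'(a := b, b := a)) h) = h"
        using m'H b assms by auto
    next
      fix h assume "h \<notin> H"
      then show "(m'(a := b, b := a)) h = h" using m'H b assms by auto
    qed
  qed
qed

lemma inj_on_match_pair: "inj_on (\<lambda>m'. match_pair m' a b) (perfect_matchings_on (H - {a, b}))"
proof (rule inj_onI)
  fix m1 m2
  assume m: "m1 \<in> perfect_matchings_on (H - {a, b})" "m2 \<in> perfect_matchings_on (H - {a, b})"
    and eq: "match_pair m1 a b = match_pair m2 a b"
  have "m1 a = a" "m1 b = b" "m2 a = a" "m2 b = b"
    using m unfolding perfect_matchings_on_def by auto
  then show "m1 = m2"
    using eq unfolding match_pair_def by (metis fun_upd_triv fun_upd_upd fun_upd_twist)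
qed

lemma sum_perfect_matchings_on:
  fixes f :: "('a \<Rightarrow> 'a) \<Rightarrow> real"
  assumes "finite H" "a \<in> H"
  shows "sum f (perfect_matchings_on H) =
    (\<Sum>b \<in> H - {a}. \<Sum>m' \<in> perfect_matchings_on (H - {a, b}). f (match_pair m' a b))"
proof -
  have disj: "(\<lambda>m'. match_pair m' a i) ` perfect_matchings_on (H - {a, i}) \<inter>
      (\<lambda>m'. match_pair m' a j) ` perfect_matchings_on (H - {a, j}) = {}"
    if "i \<noteq> j" "i \<noteq> a" "j \<noteq> a" for i j
  proof -
    have "match_pair m1 a i \<noteq> match_pair m2 a j" for m1 m2
      using that match_pair_first[of a i m1] match_pair_first[of a j m2] by metis
    then show ?thesis by blast
  qed
  have "sum f (perfect_matchings_on H) =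
      (\<Sum>b \<in> H - {a}. sum f ((\<lambda>m'. match_pair m' a b) ` perfect_matchings_on (H - {a, b})))"
    unfolding perfect_matchings_on_decomp[OF assms(2)]
    using assms disj by (intro sum.UNION_disjoint) (auto simp: finite_perfect_matchings_on)
  also have "\<dots> = (\<Sum>b \<in> H - {a}. \<Sum>m' \<in> perfect_matchings_on (H - {a, b}). f (match_pair m' a b))"
    by (rule sum.cong[OF refl], rule sum.reindex_cong[OF inj_on_match_pair]) auto
  finally show ?thesis .
qed

fun num_matchings :: "nat \<Rightarrow> nat" where
  "num_matchings 0 = 1"
| "num_matchings (Suc 0) = 0"
| "num_matchings (Suc (Suc k)) = Suc k * num_matchings k"

lemma num_matchings_pos: "even k \<Longrightarrow> num_matchings k > 0"
  by (induction k rule: num_matchings.induct) auto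

lemma card_Diff_pair: "finite H \<Longrightarrow> a \<in> H \<Longrightarrow> b \<in> H \<Longrightarrow> a \<noteq> b \<Longrightarrow> card (H - {a, b}) = card H - 2"
  by (subst card_Diff_subset) auto

lemma card_perfect_matchings_on:
  "finite H \<Longrightarrow> card (perfect_matchings_on H) = num_matchings (card H)"
proof (induction "card H" arbitrary: H rule: less_induct)
  case less
  show ?case
  proof (cases "H = {}")
    case True
    then have "perfect_matchings_on H = {id}"
      unfolding perfect_matchings_on_def by (auto simp: fun_eq_iff)
    then show ?thesis using True by simp
  next
    case False
    then obtain a where a: "a \<in> H" by blast
    have card_rest: "card (perfect_matchings_on (H - {a, b})) = num_matchings (card H - 2)"
      if b: "b \<in> H - {a}" for b
    proof -
      have "card (H - {a, b}) = card H - 2"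
        using b a less.prems by (intro card_Diff_pair) auto
      moreover have "card (H - {a, b}) < card H"
        using b a less.prems by (intro psubset_card_mono) auto
      ultimately show ?thesis
        using less.hyps[of "H - {a, b}"] less.prems by simp
    qed
    have "real (card (perfect_matchings_on H)) =
        (\<Sum>b \<in> H - {a}. \<Sum>m' \<in> perfect_matchings_on (H - {a, b}). (1::real))"
      using sum_perfect_matchings_on[OF less.prems a, of "\<lambda>_. 1"] by simp
    also have "\<dots> = real ((card H - 1) * num_matchings (card H - 2))"
      using a less.prems by (simp add: card_rest)
    finally have "card (perfect_matchings_on H) = (card H - 1) * num_matchings (card H - 2)"
      by (simp only: of_nat_eq_iff)
    moreover have "card H \<noteq> 0"
      using a less.prems by auto
    ultimately show ?thesis
      by (cases "card H" rule: num_matchings.cases) auto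
  qed
qed

section \<open>Exploring a component through its half-edges\<close>

definition matching_on :: "'a set \<Rightarrow> ('a \<Rightarrow> 'a) \<Rightarrow> bool" where
  "matching_on H m \<longleftrightarrow> (\<forall>x\<in>H. m x \<in> H \<and> m x \<noteq> x \<and> m (m x) = x)"

lemma matching_on_perfect_matching: "m \<in> perfect_matchings_on H \<Longrightarrow> matching_on H m"
  unfolding perfect_matchings_on_def matching_on_def by auto

inductive_set reach ::
  "('v \<times> 'i) set \<Rightarrow> ('v \<times> 'i) set \<Rightarrow> (('v \<times> 'i) \<Rightarrow> ('v \<times> 'i)) \<Rightarrow> ('v \<times> 'i) set"
  for H A m where
  reach_base: "x \<in> A \<Longrightarrow> x \<in> reach H A m"
| reach_partner: "x \<in> reach H A m \<Longrightarrow> m x \<in> reach H A m"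
| reach_sibling: "x \<in> reach H A m \<Longrightarrow> y \<in> H \<Longrightarrow> fst y = fst x \<Longrightarrow> y \<in> reach H A m"

definition vertex_closed :: "('v \<times> 'i) set \<Rightarrow> ('v \<times> 'i) set \<Rightarrow> bool" where
  "vertex_closed H A \<longleftrightarrow> (\<forall>x\<in>A. \<forall>y\<in>H. fst y = fst x \<longrightarrow> y \<in> A)"

text \<open>\<open>A\<close> holds the active half-edges, the unpaired ones at discovered vertices.\<close>

definition explore_step :: "('v \<times> 'i) set \<Rightarrow> ('v \<times> 'i) set \<Rightarrow> 'v \<times> 'i \<Rightarrow> 'v \<times> 'i \<Rightarrow> ('v \<times> 'i) set" where
  "explore_step H A a b =
     (if b \<in> A then A - {a, b} else (A \<union> {y\<in>H. fst y = fst b}) - {a, b})"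

definition new_vertices :: "('v \<times> 'i) set \<Rightarrow> ('v \<times> 'i) set \<Rightarrow> (('v \<times> 'i) \<Rightarrow> ('v \<times> 'i)) \<Rightarrow> 'v set" where
  "new_vertices H A m = fst ` reach H A m - fst ` A"

lemma reach_subset:
  assumes "A \<subseteq> H" "matching_on H m"
  shows "reach H A m \<subseteq> H"
proof
  fix x assume "x \<in> reach H A m"
  then show "x \<in> H"
    by induction (use assms in \<open>auto simp: matching_on_def\<close>)
qed

lemma reach_empty [simp]: "reach H {} m = {}"
proof -
  have "x \<notin> reach H {} m" for x
  proof
    assume "x \<in> reach H {} m"
    then show False by induction auto
  qed
  then show ?thesis by blast
qed

lemma subset_reach: "A \<subseteq> reach H A m"
  by (auto intro: reach_base)

lemma new_vertices_eq:
  assumes "matching_on H m" "A \<subseteq> H" "vertex_closed H A"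
  shows "new_vertices H A m = fst ` (reach H A m - A)"
  using reach_subset[OF assms(2,1)] assms(3)
  unfolding new_vertices_def vertex_closed_def by (auto simp: image_iff)

lemma explore_step_facts:
  assumes mo: "matching_on H m" and AH: "A \<subseteq> H" and vc: "vertex_closed H A" and a: "a \<in> A"
  defines "b \<equiv> m a"
  shows "a \<noteq> b" "b \<in> H" "m b = a" "matching_on (H - {a, b}) m"
    "explore_step H A a b \<subseteq> H - {a, b}" "vertex_closed (H - {a, b}) (explore_step H A a b)"
proof -
  have aH: "a \<in> H" using a AH by auto
  show ab: "a \<noteq> b" "b \<in> H" "m b = a"
    using mo aH unfolding matching_on_def b_def by metis+
  show "matching_on (H - {a, b}) m"
    unfolding matching_on_def
  proof
    fix x assume x: "x \<in> H - {a, b}"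
    then have "m x \<noteq> a" "m x \<noteq> b"
      using mo ab aH unfolding matching_on_def b_def by (metis DiffD1 DiffD2 insertCI)+
    then show "m x \<in> H - {a, b} \<and> m x \<noteq> x \<and> m (m x) = x"
      using x mo unfolding matching_on_def by auto
  qed
  show "explore_step H A a b \<subseteq> H - {a, b}"
    using AH unfolding explore_step_def by auto
  show "vertex_closed (H - {a, b}) (explore_step H A a b)"
    using vc unfolding vertex_closed_def explore_step_def by auto
qed

lemma reach_explore_step:
  assumes mo: "matching_on H m" and AH: "A \<subseteq> H" and vc: "vertex_closed H A" and a: "a \<in> A"
  defines "b \<equiv> m a"
  shows "reach H A m = insert a (insert b (reach (H - {a, b}) (explore_step H A a b) m))"
    (is "?R = insert a (insert b ?R')")
proof -
  note sf = explore_step_facts[OF mo AH vc a, folded b_def]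
  have ab: "a \<in> ?R" "b \<in> ?R"
    unfolding b_def by (auto intro: reach.intros a)
  have A'R: "explore_step H A a b \<subseteq> ?R"
    using ab(2) unfolding explore_step_def by (auto intro: reach_base reach_sibling)
  have sub1: "x \<in> ?R" if "x \<in> ?R'" for x
    using that by induction (use A'R in \<open>auto intro: reach.intros\<close>)
  have sub2: "x \<in> insert a (insert b ?R')" if "x \<in> ?R" for x
    using that
  proof induction
    case (reach_base x)
    then show ?case
      unfolding explore_step_def by (auto intro: reach.reach_base)
  next
    case (reach_partner x)
    then show ?case
      using sf(3) unfolding b_def by (auto intro: reach.reach_partner)
  next
    case (reach_sibling x y)
    show ?case
    proof (cases "y = a \<or> y = b")
      case False
      have "y \<in> explore_step H A a b" if "x = a \<or> x = b"
        using that False reach_sibling.hyps vc a unfolding vertex_closed_def explore_step_def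
        by auto
      then show ?thesis
        using reach_sibling False by (auto intro: reach.reach_base reach.reach_sibling)
    qed auto
  qed
  show ?thesis using sub1 sub2 ab by blast
qed

lemma new_vertices_explore_step:
  assumes mo: "matching_on H m" and AH: "A \<subseteq> H" and vc: "vertex_closed H A" and a: "a \<in> A"
  defines "b \<equiv> m a"
  shows "b \<in> A \<Longrightarrow>
      new_vertices H A m = new_vertices (H - {a, b}) (explore_step H A a b) m"
    and "b \<notin> A \<Longrightarrow>
      new_vertices H A m = insert (fst b) (new_vertices (H - {a, b}) (explore_step H A a b) m)"
    and "b \<notin> A \<Longrightarrow> fst b \<notin> new_vertices (H - {a, b}) (explore_step H A a b) m"
proof -
  note sf = explore_step_facts[OF mo AH vc a, folded b_def]
  let ?A' = "explore_step H A a b" and ?R' = "reach (H - {a, b}) (explore_step H A a b) m"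
  have R'H: "?R' \<subseteq> H - {a, b}"
    using reach_subset[OF sf(5,4)] .
  have R: "reach H A m = insert a (insert b ?R')"
    using reach_explore_step[OF mo AH vc a] unfolding b_def .
  have new: "new_vertices H A m = fst ` (reach H A m - A)"
    by (rule new_vertices_eq[OF mo AH vc])
  have new': "new_vertices (H - {a, b}) ?A' m = fst ` (?R' - ?A')"
    by (rule new_vertices_eq[OF sf(4,5,6)])
  show "new_vertices H A m = new_vertices (H - {a, b}) ?A' m" if "b \<in> A"
  proof -
    have "reach H A m - A = ?R' - ?A'"
      using R R'H a that unfolding explore_step_def by auto
    then show ?thesis using new new' by simp
  qed
  assume bA: "b \<notin> A"
  have A': "?A' = (A \<union> {y\<in>H. fst y = fst b}) - {a, b}"
    using bA unfolding explore_step_def by simp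
  have "reach H A m - A = {y\<in>H. fst y = fst b} - A \<union> (?R' - ?A')"
    using R R'H a bA sf(2) subset_reach[of ?A' "H - {a, b}" m] unfolding A' by auto
  moreover have "{y\<in>H. fst y = fst b} - A = {y\<in>H. fst y = fst b}"
    using vc bA sf(2) unfolding vertex_closed_def by auto
  ultimately have "reach H A m - A = {y\<in>H. fst y = fst b} \<union> (?R' - ?A')"
    by simp
  then show "new_vertices H A m = insert (fst b) (new_vertices (H - {a, b}) ?A' m)"
    using new new' sf(2) by auto
  show "fst b \<notin> new_vertices (H - {a, b}) ?A' m"
    using new' R'H A' by auto
qed

text \<open>Weight of the exploration of \<open>reach H A m\<close> run for at most \<open>t\<close> steps, always continuing
  from the active half-edge picked by \<open>SOME\<close>: a factor \<open>g\<close> for every edge between two active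
  half-edges and \<open>w\<close> for every newly discovered vertex.  Running out of steps, or discovering
  more than \<open>db\<close> new vertices, gives weight \<open>0\<close>; the vertex budget keeps the explored region
  small enough for the drift estimate below.\<close>

fun explore_weight ::
  "real \<Rightarrow> real \<Rightarrow> nat \<Rightarrow> nat \<Rightarrow> ('v \<times> 'i) set \<Rightarrow> ('v \<times> 'i) set \<Rightarrow> (('v \<times> 'i) \<Rightarrow> ('v \<times> 'i)) \<Rightarrow> real"
where
  "explore_weight g w 0 db H A m = (if A = {} then 1 else 0)"
| "explore_weight g w (Suc t) db H A m = (if A = {} then 1 else
    (let a = (SOME a. a \<in> A); b = m a in
     if b \<in> A then g * explore_weight g w t db (H - {a, b}) (explore_step H A a b) m
     else if db = 0 then 0
     else w * explore_weight g w t (db - 1) (H - {a, b}) (explore_step H A a b) m))"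

lemma explore_weight_nonneg: "0 \<le> g \<Longrightarrow> 0 \<le> w \<Longrightarrow> 0 \<le> explore_weight g w t db H A m"
  by (induction t arbitrary: db H A) (auto simp: Let_def)

lemma explore_weight_cong:
  assumes "A \<subseteq> H" "\<forall>x\<in>H. m x = m' x"
  shows "explore_weight g w t db H A m = explore_weight g w t db H A m'"
  using assms
proof (induction t arbitrary: db H A)
  case (Suc t)
  show ?case
  proof (cases "A = {}")
    case False
    define a where "a = (SOME a. a \<in> A)"
    have "a \<in> A"
      unfolding a_def using False by (simp add: some_in_eq)
    then have "m a = m' a"
      using Suc.prems by auto
    moreover have "explore_weight g w t db' (H - {a, b}) (explore_step H A a b) m =
        explore_weight g w t db' (H - {a, b}) (explore_step H A a b) m'" for db' b
      using Suc.prems by (intro Suc.IH) (auto simp: explore_step_def)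
    ultimately show ?thesis
      using False by (simp add: a_def[symmetric] Let_def)
  qed simp
qed simp

lemma card_reach_explore_step:
  assumes "finite H" "matching_on H m" "A \<subseteq> H" "vertex_closed H A" "a \<in> A"
  shows "card (reach H A m) = card (reach (H - {a, m a}) (explore_step H A a (m a)) m) + 2"
proof -
  note sf = explore_step_facts[OF assms(2-5)]
  have "reach (H - {a, m a}) (explore_step H A a (m a)) m \<subseteq> H - {a, m a}"
    using reach_subset[OF sf(5,4)] .
  then have "finite (reach (H - {a, m a}) (explore_step H A a (m a)) m)"
    and "a \<notin> reach (H - {a, m a}) (explore_step H A a (m a)) m"
    and "m a \<notin> reach (H - {a, m a}) (explore_step H A a (m a)) m"
    using assms(1) finite_subset by auto
  then show ?thesis
    unfolding reach_explore_step[OF assms(2-5)] using sf(1) by simp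
qed

lemma card_new_vertices_explore_step:
  assumes "finite H" "matching_on H m" "A \<subseteq> H" "vertex_closed H A" "a \<in> A"
  shows "card (new_vertices H A m) =
    card (new_vertices (H - {a, m a}) (explore_step H A a (m a)) m) + (if m a \<in> A then 0 else 1)"
proof -
  note sf = explore_step_facts[OF assms(2-5)]
  have "finite (new_vertices (H - {a, m a}) (explore_step H A a (m a)) m)"
    using reach_subset[OF sf(5,4)] assms(1) finite_subset unfolding new_vertices_def by blast
  then show ?thesis
    using new_vertices_explore_step[OF assms(2-5)] by auto
qed

lemma explore_weight_eval:
  assumes "finite H" "matching_on H m" "A \<subseteq> H" "vertex_closed H A"
    and "card (reach H A m) \<le> 2 * t" "card (new_vertices H A m) \<le> db"
  shows "explore_weight g w t db H A m =
           g ^ (card (reach H A m) div 2 - card (new_vertices H A m)) * w ^ card (new_vertices H A m)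
         \<and> card (new_vertices H A m) \<le> card (reach H A m) div 2"
  using assms
proof (induction t arbitrary: db H A)
  case 0
  have "finite (reach H A m)"
    using reach_subset[OF 0(3,2)] 0(1) finite_subset by blast
  then have "A = {}"
    using 0 subset_reach[of A H m] by auto
  then show ?case by (simp add: new_vertices_def)
next
  case (Suc t)
  show ?case
  proof (cases "A = {}")
    case True
    then show ?thesis by (simp add: new_vertices_def)
  next
    case False
    define a where "a = (SOME a. a \<in> A)"
    have a: "a \<in> A"
      unfolding a_def using False by (simp add: some_in_eq)
    let ?H' = "H - {a, m a}" and ?A' = "explore_step H A a (m a)"
    let ?R' = "reach ?H' ?A' m" and ?V' = "new_vertices ?H' ?A' m"
    note sf = explore_step_facts[OF Suc.prems(2-4) a]
    note cR = card_reach_explore_step[OF Suc.prems(1-4) a]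
    note cV = card_new_vertices_explore_step[OF Suc.prems(1-4) a]
    show ?thesis
    proof (cases "m a \<in> A")
      case True
      have IH: "explore_weight g w t db ?H' ?A' m =
          g ^ (card ?R' div 2 - card ?V') * w ^ card ?V' \<and> card ?V' \<le> card ?R' div 2"
        using Suc.IH[of ?H' ?A' db] Suc.prems(1,5,6) sf(4-6) cR cV True by auto
      have "explore_weight g w (Suc t) db H A m = g * explore_weight g w t db ?H' ?A' m"
        using False True by (simp add: a_def[symmetric] Let_def)
      then show ?thesis
        using IH cR cV True by (auto simp: Suc_diff_le)
    next
      case False
      then have db: "db \<noteq> 0" "card ?V' \<le> db - 1"
        using Suc.prems(6) cV by auto
      have IH: "explore_weight g w t (db - 1) ?H' ?A' m =
          g ^ (card ?R' div 2 - card ?V') * w ^ card ?V' \<and> card ?V' \<le> card ?R' div 2"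
        using Suc.IH[of ?H' ?A' "db - 1"] Suc.prems(1,5) sf(4-6) cR db(2) by auto
      have "explore_weight g w (Suc t) db H A m = w * explore_weight g w t (db - 1) ?H' ?A' m"
        using \<open>A \<noteq> {}\<close> False db(1) by (simp add: a_def[symmetric] Let_def)
      then show ?thesis
        using IH cR cV False by auto
    qed
  qed
qed

section \<open>The supermartingale bound\<close>

lemma explore_weight_match_pair:
  assumes "A \<noteq> {}" "A \<subseteq> H" "a = (SOME a. a \<in> A)" "b \<noteq> a"
  shows "explore_weight g w (Suc t) db H A (match_pair m a b) =
    (if b \<in> A then g * explore_weight g w t db (H - {a, b}) (explore_step H A a b) m
     else if db = 0 then 0
     else w * explore_weight g w t (db - 1) (H - {a, b}) (explore_step H A a b) m)"
proof -
  have "explore_weight g w t db' (H - {a, b}) (explore_step H A a b) (match_pair m a b) =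
      explore_weight g w t db' (H - {a, b}) (explore_step H A a b) m" for db'
    using assms(2) by (intro explore_weight_cong) (auto simp: explore_step_def match_pair_def)
  then show ?thesis
    using assms match_pair_first[of a b m] by (simp add: Let_def)
qed

text \<open>While at most \<open>kz\<close> vertices
  are explored, the inequality makes \<open>x ^ card A\<close> times the accumulated weight a
  supermartingale under a uniform matching: pairing \<open>a\<close> with another active half-edge divides
  \<open>x ^ card A\<close> by \<open>x\<^sup>2\<close>, discovering a vertex of degree \<open>d\<close> multiplies it by \<open>x ^ (d - 2)\<close>.\<close>

definition drift_condition :: "('v \<times> 'i) set \<Rightarrow> real \<Rightarrow> real \<Rightarrow> nat \<Rightarrow> bool" where
  "drift_condition H0 x w kz \<longleftrightarrow> (\<exists>K.
     (\<forall>S. finite S \<longrightarrow> card S \<le> kz \<longrightarrow> real (card {y\<in>H0. fst y \<in> S}) \<le> K) \<and>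
     w * K / x\<^sup>2 + w * (\<Sum>y\<in>H0. x ^ card {z\<in>H0. fst z = fst y}) / x\<^sup>2 \<le> real (card H0) - K - 1)"

text \<open>The invariant of the exploration started at a vertex: \<open>S\<close> holds the vertices found so far,
  whose remaining half-edges are the active ones, and \<open>db\<close> is the remaining vertex budget.\<close>

definition exploration_invariant ::
  "('v \<times> 'i) set \<Rightarrow> nat \<Rightarrow> ('v \<times> 'i) set \<Rightarrow> 'v set \<Rightarrow> nat \<Rightarrow> bool" where
  "exploration_invariant H0 kz H S db \<longleftrightarrow>
     H \<subseteq> H0 \<and> even (card H) \<and> H0 - H \<subseteq> {y\<in>H0. fst y \<in> S} \<and> finite S \<and> card S + db \<le> kz"

lemma drift_condition_obtain:
  assumes "drift_condition H0 x w kz" "exploration_invariant H0 kz H S db" "finite H0"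
  obtains K where "real (card {y\<in>H. fst y \<in> S}) \<le> K" "real (card H0) - K \<le> real (card H)"
    "w * K / x\<^sup>2 + w * (\<Sum>y\<in>H0. x ^ card {z\<in>H0. fst z = fst y}) / x\<^sup>2 \<le> real (card H0) - K - 1"
proof -
  obtain K where K: "\<And>S'. finite S' \<Longrightarrow> card S' \<le> kz \<Longrightarrow> real (card {y\<in>H0. fst y \<in> S'}) \<le> K"
    and cond: "w * K / x\<^sup>2 + w * (\<Sum>y\<in>H0. x ^ card {z\<in>H0. fst z = fst y}) / x\<^sup>2
      \<le> real (card H0) - K - 1"
    using assms(1) unfolding drift_condition_def by blast
  have inv: "H \<subseteq> H0" "H0 - H \<subseteq> {y\<in>H0. fst y \<in> S}" "finite S" "card S \<le> kz"
    using assms(2) unfolding exploration_invariant_def by auto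
  have "card {y\<in>H. fst y \<in> S} \<le> card {y\<in>H0. fst y \<in> S}" "card (H0 - H) \<le> card {y\<in>H0. fst y \<in> S}"
    using assms(3) inv(1,2) by (auto intro: card_mono)
  moreover have "finite H"
    using assms(3) inv(1) finite_subset by blast
  then have "card (H0 - H) = card H0 - card H" "card H \<le> card H0"
    using assms(3) inv(1) by (auto simp: card_Diff_subset card_mono)
  ultimately have "real (card {y\<in>H. fst y \<in> S}) \<le> K" "real (card H0) - K \<le> real (card H)"
    using K[OF inv(3,4)] by linarith+
  then show ?thesis
    using cond that by blast
qed

lemma exploration_invariant_internal:
  assumes "exploration_invariant H0 kz H S db" "finite H0"
    and "a \<in> H" "b \<in> H" "a \<noteq> b" "fst a \<in> S" "fst b \<in> S"
  shows "exploration_invariant H0 kz (H - {a, b}) S db"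
  using assms card_Diff_pair[of H a b] finite_subset[of H H0]
  unfolding exploration_invariant_def by auto

lemma exploration_invariant_discover:
  assumes "exploration_invariant H0 kz H S db" "finite H0"
    and "a \<in> H" "b \<in> H" "a \<noteq> b" "fst a \<in> S" "db \<noteq> 0"
  shows "exploration_invariant H0 kz (H - {a, b}) (insert (fst b) S) (db - 1)"
  using assms card_Diff_pair[of H a b] finite_subset[of H H0]
  unfolding exploration_invariant_def by (auto simp: card_insert_if)

lemma card_active_internal:
  assumes "finite H" "a \<in> H" "b \<in> H" "a \<noteq> b" "fst a \<in> S" "fst b \<in> S"
  shows "card {y\<in>H - {a, b}. fst y \<in> S} + 2 = card {y\<in>H. fst y \<in> S}"
proof -
  have "{y\<in>H - {a, b}. fst y \<in> S} = {y\<in>H. fst y \<in> S} - {a, b}"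
    by auto
  then show ?thesis
    using assms card_Diff_pair[of "{y\<in>H. fst y \<in> S}" a b] card_mono[of "{y\<in>H. fst y \<in> S}" "{a, b}"]
    by auto
qed

lemma card_active_discover:
  assumes "exploration_invariant H0 kz H S db" "finite H0"
    and "a \<in> H" "b \<in> H" "fst a \<in> S" "fst b \<notin> S"
  shows "card {y\<in>H - {a, b}. fst y \<in> insert (fst b) S} + 2 =
    card {y\<in>H. fst y \<in> S} + card {y\<in>H0. fst y = fst b}"
    (is "card ?A' + 2 = card ?A + card ?B")
proof -
  have HH0: "H \<subseteq> H0" "H0 - H \<subseteq> {y\<in>H0. fst y \<in> S}"
    using assms(1) unfolding exploration_invariant_def by auto
  then have "?B = {y\<in>H. fst y = fst b}"
    using assms(6) by auto
  then have A': "?A' = (?A - {a}) \<union> (?B - {b})"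
    using assms(3-6) by auto
  have fin: "finite ?A" "finite ?B"
    using assms(2) HH0(1) finite_subset by fastforce+
  have mem: "a \<in> ?A" "b \<in> ?B"
    using assms(3-5) HH0 by auto
  have "card ?A' = card (?A - {a}) + card (?B - {b})"
    unfolding A' using fin assms(6) by (intro card_Un_disjoint) auto
  moreover have "card ?A = Suc (card (?A - {a}))" "card ?B = Suc (card (?B - {b}))"
    using card.remove[OF fin(1) mem(1)] card.remove[OF fin(2) mem(2)] .
  ultimately show ?thesis
    by linarith
qed

lemma drift_sum_le:
  fixes g w x K P :: real
  assumes "finite H0" "H \<subseteq> H0" "A \<subseteq> H" "a \<in> A"
    and g: "0 \<le> g" "g \<le> w" and x: "0 < x" "x \<le> 1" and P: "0 \<le> P"
    and A: "real (card A) \<le> K" and H: "real (card H0) - K \<le> real (card H)"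
    and drift: "w * K / x\<^sup>2 + w * (\<Sum>y\<in>H0. x ^ card {z\<in>H0. fst z = fst y}) / x\<^sup>2
      \<le> real (card H0) - K - 1"
  shows "(\<Sum>b\<in>H - {a}. (if b \<in> A then g * x ^ card A / x\<^sup>2
            else w * x ^ card A * x ^ card {z\<in>H0. fst z = fst b} / x\<^sup>2) * P)
    \<le> x ^ card A * (real (card H) - 1) * P"
proof -
  let ?d = "\<lambda>b. card {z\<in>H0. fst z = fst b}"
  define X where "X = x ^ card A * P / x\<^sup>2"
  have X: "0 \<le> X"
    unfolding X_def using x P by simp
  have fin: "finite H" "finite A"
    using finite_subset[OF assms(2,1)] finite_subset[OF assms(3)] by auto
  have "H - {a} = (A - {a}) \<union> (H - A)"
    using assms(3,4) by auto
  then have split: "(\<Sum>b\<in>H - {a}. f b) = (\<Sum>b\<in>A - {a}. f b) + (\<Sum>b\<in>H - A. f b)"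
    for f :: "_ \<Rightarrow> real"
    using fin by (simp only:) (rule sum.union_disjoint; auto)
  have "(\<Sum>b\<in>H - {a}. (if b \<in> A then g * x ^ card A / x\<^sup>2
        else w * x ^ card A * x ^ ?d b / x\<^sup>2) * P)
      = (\<Sum>b\<in>A - {a}. g * X) + (\<Sum>b\<in>H - A. w * x ^ ?d b * X)"
    unfolding split X_def by (intro arg_cong2[where f = "(+)"] sum.cong) auto
  also have "\<dots> = X * (real (card A - 1) * g + w * (\<Sum>b\<in>H - A. x ^ ?d b))"
    using assms(4) fin by (simp add: sum_distrib_left sum_distrib_right algebra_simps)
  also have "\<dots> \<le> X * (K * w + w * (\<Sum>y\<in>H0. x ^ ?d y))"
  proof -
    have "real (card A - 1) * g \<le> K * w"
      using A g by (intro mult_mono) auto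
    moreover have "(\<Sum>b\<in>H - A. x ^ ?d b) \<le> (\<Sum>y\<in>H0. x ^ ?d y)"
      using assms(1,2) x by (intro sum_mono2) auto
    ultimately show ?thesis
      using X g by (intro mult_left_mono add_mono) auto
  qed
  also have "\<dots> \<le> X * (x\<^sup>2 * (real (card H) - 1))"
  proof (rule mult_left_mono[OF _ X])
    have "K * w + w * (\<Sum>y\<in>H0. x ^ ?d y) \<le> x\<^sup>2 * (real (card H0) - K - 1)"
      using drift x by (simp add: field_simps)
    also have "\<dots> \<le> x\<^sup>2 * (real (card H) - 1)"
      using H by (intro mult_left_mono) auto
    finally show "K * w + w * (\<Sum>y\<in>H0. x ^ ?d y) \<le> x\<^sup>2 * (real (card H) - 1)" .
  qed
  also have "\<dots> = x ^ card A * (real (card H) - 1) * P"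
    unfolding X_def using x by simp
  finally show ?thesis .
qed

lemma power_eq_divide_square: "(x::real) \<noteq> 0 \<Longrightarrow> k + 2 = n \<Longrightarrow> x ^ k = x ^ n / x\<^sup>2"
  by (auto simp: power2_eq_square)

lemma explore_weight_step_le:
  assumes IH: "\<And>H' S' db'. exploration_invariant H0 kz H' S' db' \<Longrightarrow>
      (\<Sum>m\<in>perfect_matchings_on H'. explore_weight g w t db' H' {y\<in>H'. fst y \<in> S'} m)
        \<le> x ^ card {y\<in>H'. fst y \<in> S'} * real (card (perfect_matchings_on H'))"
    and inv: "exploration_invariant H0 kz H S db" and H0: "finite H0"
    and g: "0 \<le> g" "0 \<le> w" and x: "0 < x"
    and A: "A = {y\<in>H. fst y \<in> S}" "A \<noteq> {}" and a: "a = (SOME a. a \<in> A)" and b: "b \<in> H - {a}"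
  shows "(\<Sum>m'\<in>perfect_matchings_on (H - {a, b}). explore_weight g w (Suc t) db H A (match_pair m' a b))
    \<le> (if b \<in> A then g * x ^ card A / x\<^sup>2
        else w * x ^ card A * x ^ card {z\<in>H0. fst z = fst b} / x\<^sup>2) * num_matchings (card H - 2)"
proof -
  have "a \<in> A"
    unfolding a using A(2) by (simp add: some_in_eq)
  then have aH: "a \<in> H" "fst a \<in> S"
    using A(1) by auto
  have finH: "finite H"
    using inv H0 finite_subset unfolding exploration_invariant_def by blast
  have "card (H - {a, b}) = card H - 2"
    using finH aH b by (intro card_Diff_pair) auto
  then have cpm: "card (perfect_matchings_on (H - {a, b})) = num_matchings (card H - 2)"
    using finH by (simp add: card_perfect_matchings_on)
  have unfold: "explore_weight g w (Suc t) db H A (match_pair m a b) =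
      (if b \<in> A then g * explore_weight g w t db (H - {a, b}) (explore_step H A a b) m
       else if db = 0 then 0
       else w * explore_weight g w t (db - 1) (H - {a, b}) (explore_step H A a b) m)" for m
    using A a b by (intro explore_weight_match_pair) auto
  show ?thesis
  proof (cases "b \<in> A")
    case True
    then have "fst b \<in> S"
      using A(1) by simp
    then have A': "explore_step H A a b = {y\<in>H - {a, b}. fst y \<in> S}"
      using True unfolding A(1) explore_step_def by auto
    have "(\<Sum>m'\<in>perfect_matchings_on (H - {a, b}). explore_weight g w (Suc t) db H A (match_pair m' a b))
        = g * (\<Sum>m'\<in>perfect_matchings_on (H - {a, b}).
            explore_weight g w t db (H - {a, b}) {y\<in>H - {a, b}. fst y \<in> S} m')"
      using unfold True b A' A(1) by (simp add: sum_distrib_left)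
    also have "\<dots> \<le> g * (x ^ card {y\<in>H - {a, b}. fst y \<in> S}
        * real (card (perfect_matchings_on (H - {a, b}))))"
      using b aH \<open>fst b \<in> S\<close>
      by (intro mult_left_mono g IH exploration_invariant_internal[OF inv H0]) auto
    also have "x ^ card {y\<in>H - {a, b}. fst y \<in> S} = x ^ card A / x\<^sup>2"
      using card_active_internal[OF finH aH(1) _ _ aH(2) \<open>fst b \<in> S\<close>] b x A(1)
      by (intro power_eq_divide_square) auto
    finally show ?thesis
      using True cpm by simp
  next
    case bA: False
    then have "fst b \<notin> S"
      using A(1) b by simp
    show ?thesis
    proof (cases "db = 0")
      case True
      then show ?thesis
        using unfold bA b g x by (simp add: A(1))
    next
      case False
      have A': "explore_step H A a b = {y\<in>H - {a, b}. fst y \<in> insert (fst b) S}"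
        using bA unfolding A(1) explore_step_def by auto
      have "(\<Sum>m'\<in>perfect_matchings_on (H - {a, b}).
          explore_weight g w (Suc t) db H A (match_pair m' a b))
          = w * (\<Sum>m'\<in>perfect_matchings_on (H - {a, b}).
              explore_weight g w t (db - 1) (H - {a, b}) {y\<in>H - {a, b}. fst y \<in> insert (fst b) S} m')"
        using unfold bA False b A' A(1) by (simp add: sum_distrib_left)
      also have "\<dots> \<le> w * (x ^ card {y\<in>H - {a, b}. fst y \<in> insert (fst b) S}
          * real (card (perfect_matchings_on (H - {a, b}))))"
        using b aH False
        by (intro mult_left_mono g IH exploration_invariant_discover[OF inv H0]) auto
      also have "x ^ card {y\<in>H - {a, b}. fst y \<in> insert (fst b) S}
          = x ^ (card A + card {z\<in>H0. fst z = fst b}) / x\<^sup>2"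
        using card_active_discover[OF inv H0 aH(1) _ aH(2) \<open>fst b \<notin> S\<close>] b x A(1)
        by (intro power_eq_divide_square) auto
      finally show ?thesis
        using bA cpm by (simp add: power_add)
    qed
  qed
qed

lemma explore_weight_sum_le:
  assumes H0: "finite H0" and g: "0 \<le> g" "g \<le> w" and x: "0 < x" "x \<le> 1"
    and drift: "drift_condition H0 x w kz"
  shows "exploration_invariant H0 kz H S db \<Longrightarrow>
    (\<Sum>m\<in>perfect_matchings_on H. explore_weight g w t db H {y\<in>H. fst y \<in> S} m)
      \<le> x ^ card {y\<in>H. fst y \<in> S} * real (card (perfect_matchings_on H))"
proof (induction t arbitrary: H S db)
  case 0
  have "explore_weight g w 0 db H A m \<le> x ^ card A" for A m
    using x by (cases "A = {}") auto
  then have "(\<Sum>m\<in>perfect_matchings_on H. explore_weight g w 0 db H {y\<in>H. fst y \<in> S} m)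
      \<le> of_nat (card (perfect_matchings_on H)) * x ^ card {y\<in>H. fst y \<in> S}"
    by (intro sum_bounded_above)
  then show ?case
    by (simp only: mult.commute)
next
  case (Suc t)
  define A where "A = {y\<in>H. fst y \<in> S}"
  have inv: "H \<subseteq> H0" "even (card H)"
    using Suc.prems unfolding exploration_invariant_def by auto
  have finH: "finite H"
    using H0 inv(1) finite_subset by blast
  show ?case
  proof (cases "A = {}")
    case True
    then show ?thesis
      unfolding A_def[symmetric] by simp
  next
    case False
    define a where "a = (SOME a. a \<in> A)"
    have "a \<in> A"
      unfolding a_def using False by (simp add: some_in_eq)
    then have a: "a \<in> A" "a \<in> H"
      unfolding A_def by auto
    obtain K where cardA: "real (card A) \<le> K" and cardH: "real (card H0) - K \<le> real (card H)"
      and cond: "w * K / x\<^sup>2 + w * (\<Sum>y\<in>H0. x ^ card {z\<in>H0. fst z = fst y}) / x\<^sup>2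
        \<le> real (card H0) - K - 1"
      using drift_condition_obtain[OF drift Suc.prems H0] unfolding A_def by blast
    have "card H \<noteq> 0"
      using a(2) finH by auto
    then obtain k where k: "card H = Suc (Suc k)"
      using inv(2) by (cases "card H" rule: num_matchings.cases) auto
    have "(\<Sum>m\<in>perfect_matchings_on H. explore_weight g w (Suc t) db H A m) =
        (\<Sum>b\<in>H - {a}. \<Sum>m'\<in>perfect_matchings_on (H - {a, b}).
          explore_weight g w (Suc t) db H A (match_pair m' a b))"
      by (rule sum_perfect_matchings_on[OF finH a(2)])
    also have "\<dots> \<le> (\<Sum>b\<in>H - {a}. (if b \<in> A then g * x ^ card A / x\<^sup>2
        else w * x ^ card A * x ^ card {z\<in>H0. fst z = fst b} / x\<^sup>2) * num_matchings (card H - 2))"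
      by (rule sum_mono, rule explore_weight_step_le[OF Suc.IH Suc.prems H0])
        (use g x False A_def a_def in auto)
    also have "\<dots> \<le> x ^ card A * (real (card H) - 1) * num_matchings (card H - 2)"
      by (rule drift_sum_le[OF H0 inv(1) _ a(1) g x _ cardA cardH cond]) (auto simp: A_def)
    also have "\<dots> = x ^ card A * real (card (perfect_matchings_on H))"
      using k finH by (simp add: card_perfect_matchings_on algebra_simps)
    finally show ?thesis
      unfolding A_def .
  qed
qed

section \<open>The configuration model\<close>

lemma half_edges_Sigma: "half_edges n dn = Sigma {..<n} (\<lambda>i. {..<dn i})"
  unfolding half_edges_def by auto

lemma finite_half_edges: "finite (half_edges n dn)"
  unfolding half_edges_Sigma by auto

lemma card_half_edges: "card (half_edges n dn) = (\<Sum>i<n. dn i)"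
  unfolding half_edges_Sigma by (simp add: card_SigmaI)

lemma card_half_edges_at: "card {y \<in> half_edges n dn. fst y \<in> S} = (\<Sum>i\<in>S \<inter> {..<n}. dn i)"
proof -
  have "{y \<in> half_edges n dn. fst y \<in> S} = Sigma (S \<inter> {..<n}) (\<lambda>i. {..<dn i})"
    unfolding half_edges_def by auto
  then show ?thesis by (simp add: card_SigmaI)
qed

lemma card_half_edges_vertex: "i < n \<Longrightarrow> card {y \<in> half_edges n dn. fst y = i} = dn i"
  using card_half_edges_at[of n dn "{i}"] by simp

lemma perfect_matchings_nonempty: "even (\<Sum>i<n. dn i) \<Longrightarrow> perfect_matchings n dn \<noteq> {}"
  using card_perfect_matchings_on[OF finite_half_edges, of n dn] num_matchings_pos
  by (fastforce simp: perfect_matchings_eq_on card_half_edges)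

lemma prob_cm_with_vertex_le:
  assumes n: "n \<ge> 1" and ev: "even (\<Sum>i<n. dn i)" and r: "r > 0"
    and count: "\<And>v. real (card {m \<in> perfect_matchings n dn. Q m v}) * r
      \<le> real (card (perfect_matchings n dn))"
  shows "measure_pmf.prob (cm_with_vertex n dn) {(m, v). Q m v} \<le> 1 / r"
proof -
  let ?M = "perfect_matchings n dn"
  have fin: "finite ?M"
    unfolding perfect_matchings_eq_on by (rule finite_perfect_matchings_on[OF finite_half_edges])
  have ne: "?M \<noteq> {}"
    by (rule perfect_matchings_nonempty[OF ev])
  have M: "card ?M > 0"
    using fin ne by (simp add: card_gt_0_iff)
  have "cm_with_vertex n dn = pmf_of_set (?M \<times> {..<n})"
  proof (rule pmf_eqI)
    fix z :: "((nat \<times> nat) \<Rightarrow> (nat \<times> nat)) \<times> nat"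
    show "pmf (cm_with_vertex n dn) z = pmf (pmf_of_set (?M \<times> {..<n})) z"
      using fin ne n unfolding cm_with_vertex_def config_model_def
      by (cases z) (simp add: pmf_pair indicator_def card_cartesian_product lessThan_empty_iff)
  qed
  moreover have "(?M \<times> {..<n}) \<inter> {(m, v). Q m v} = (\<Union>v<n. {m \<in> ?M. Q m v} \<times> {v})"
    by auto
  then have "card ((?M \<times> {..<n}) \<inter> {(m, v). Q m v}) = (\<Sum>v<n. card ({m \<in> ?M. Q m v} \<times> {v}))"
    using fin by (simp only:) (rule card_UN_disjoint; auto)
  then have "card ((?M \<times> {..<n}) \<inter> {(m, v). Q m v}) = (\<Sum>v<n. card {m \<in> ?M. Q m v})"
    by (simp add: card_cartesian_product)
  ultimately have "measure_pmf.prob (cm_with_vertex n dn) {(m, v). Q m v} =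
      (\<Sum>v<n. real (card {m \<in> ?M. Q m v})) / (real (card ?M) * real n)"
    using fin ne n by (simp add: measure_pmf_of_set card_cartesian_product lessThan_empty_iff)
  also have "\<dots> \<le> (\<Sum>v<n. real (card ?M) / r) / (real (card ?M) * real n)"
    using count r by (intro divide_right_mono sum_mono) (auto simp: pos_le_divide_eq)
  also have "\<dots> = 1 / r"
    using M n by simp
  finally show ?thesis .
qed

lemma component_eq_reach:
  assumes m: "m \<in> perfect_matchings_on (half_edges n dn)"
  shows "component n dn m v =
    insert v (fst ` reach (half_edges n dn) {y \<in> half_edges n dn. fst y = v} m)"
    (is "_ = insert v (fst ` ?R)")
proof
  show "component n dn m v \<subseteq> insert v (fst ` ?R)"
  proof
    fix u assume "u \<in> component n dn m v"
    then have "(v, u) \<in> (cm_adj n dn m)\<^sup>*"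
      unfolding component_def by simp
    then show "u \<in> insert v (fst ` ?R)"
    proof (induction rule: rtrancl_induct)
      case (step u u')
      then obtain h where h: "h \<in> half_edges n dn" "u = fst h" "u' = fst (m h)"
        unfolding cm_adj_def by blast
      have "h \<in> ?R"
        using step.IH h by (auto intro: reach_base reach_sibling)
      then show ?case
        using h by (auto intro: reach_partner)
    qed simp
  qed
next
  have "matching_on (half_edges n dn) m"
    using m by (rule matching_on_perfect_matching)
  then have RH: "?R \<subseteq> half_edges n dn"
    by (intro reach_subset) auto
  have "(v, fst z) \<in> (cm_adj n dn m)\<^sup>*" if "z \<in> ?R" for z
    using that
  proof induction
    case (reach_partner x)
    then have "(fst x, fst (m x)) \<in> cm_adj n dn m"
      using RH unfolding cm_adj_def by blast
    then show ?case
      using reach_partner.IH by (rule rtrancl_into_rtrancl[rotated])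
  qed simp_all
  then show "insert v (fst ` ?R) \<subseteq> component n dn m v"
    unfolding component_def by auto
qed

lemma component_edges_eq_reach:
  assumes m: "m \<in> perfect_matchings_on (half_edges n dn)"
  shows "component_edges n dn m v =
    (\<lambda>h. {h, m h}) ` reach (half_edges n dn) {y \<in> half_edges n dn. fst y = v} m"
    (is "_ = _ ` ?R")
proof -
  have "matching_on (half_edges n dn) m"
    using m by (rule matching_on_perfect_matching)
  then have RH: "?R \<subseteq> half_edges n dn"
    by (intro reach_subset) auto
  have C: "component n dn m v = insert v (fst ` ?R)"
    by (rule component_eq_reach[OF m])
  have reach_iff: "h \<in> ?R \<longleftrightarrow> h \<in> half_edges n dn \<and> fst h \<in> component n dn m v" for h
    unfolding C using RH by (auto intro: reach_base reach_sibling)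
  show ?thesis
  proof
    show "component_edges n dn m v \<subseteq> (\<lambda>h. {h, m h}) ` ?R"
      unfolding component_edges_def cm_edges_def using reach_iff by auto
    show "(\<lambda>h. {h, m h}) ` ?R \<subseteq> component_edges n dn m v"
    proof clarify
      fix h assume h: "h \<in> ?R"
      then have "m h \<in> ?R"
        by (rule reach_partner)
      then have "{h, m h} \<in> cm_edges n dn m" "\<forall>x\<in>{h, m h}. fst x \<in> component n dn m v"
        using h reach_iff unfolding cm_edges_def by blast+
      then show "{h, m h} \<in> component_edges n dn m v"
        unfolding component_edges_def by blast
    qed
  qed
qed

lemma card_eq_twice_card_matched_pairs:
  assumes mo: "matching_on H m" and RH: "R \<subseteq> H" and closed: "\<And>h. h \<in> R \<Longrightarrow> m h \<in> R"
    and fin: "finite R"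
  shows "card R = 2 * card ((\<lambda>h. {h, m h}) ` R)"
proof -
  have pair: "{h, m h} = {z, m z}" if "h \<in> R" "z \<in> {h, m h}" for h z
    using that mo RH unfolding matching_on_def by (auto simp: insert_commute)
  have "2 * card ((\<lambda>h. {h, m h}) ` R) = card (\<Union> ((\<lambda>h. {h, m h}) ` R))"
  proof (rule card_partition)
    show "card e = 2" if e: "e \<in> (\<lambda>h. {h, m h}) ` R" for e
    proof -
      obtain h where h: "h \<in> R" "e = {h, m h}"
        using e by blast
      then have "m h \<noteq> h"
        using mo RH unfolding matching_on_def by auto
      then show ?thesis
        using h by simp
    qed
    show "e1 \<inter> e2 = {}" if "e1 \<in> (\<lambda>h. {h, m h}) ` R" "e2 \<in> (\<lambda>h. {h, m h}) ` R" "e1 \<noteq> e2"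
      for e1 e2
      using that pair by blast
  qed (use fin closed in auto)
  also have "\<Union> ((\<lambda>h. {h, m h}) ` R) = R"
    using closed by auto
  finally show ?thesis by simp
qed

lemma new_vertices_from_vertex:
  assumes m: "m \<in> perfect_matchings_on (half_edges n dn)"
  shows "new_vertices (half_edges n dn) {y \<in> half_edges n dn. fst y = v} m =
    component n dn m v - {v}"
proof (cases "{y \<in> half_edges n dn. fst y = v} = {}")
  case True
  then show ?thesis
    using component_eq_reach[OF m, of v] unfolding new_vertices_def True by simp
next
  case False
  then have "fst ` {y \<in> half_edges n dn. fst y = v} = {v}"
    by auto
  then show ?thesis
    using component_eq_reach[OF m, of v] subset_reach[of "{y \<in> half_edges n dn. fst y = v}"]
    unfolding new_vertices_def by auto
qed

lemma explore_weight_sum_from_vertex_le: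
  assumes "even (\<Sum>i<n. dn i)" "0 \<le> g" "g \<le> w" "0 < x" "x \<le> 1"
    and "drift_condition (half_edges n dn) x w kz" "db < kz"
  shows "(\<Sum>m\<in>perfect_matchings_on (half_edges n dn).
      explore_weight g w t db (half_edges n dn) {y \<in> half_edges n dn. fst y = v} m)
    \<le> real (card (perfect_matchings_on (half_edges n dn)))"
proof -
  have "exploration_invariant (half_edges n dn) kz (half_edges n dn) {v} db"
    using assms(1,7) unfolding exploration_invariant_def by (simp add: card_half_edges)
  then have "(\<Sum>m\<in>perfect_matchings_on (half_edges n dn).
      explore_weight g w t db (half_edges n dn) {y \<in> half_edges n dn. fst y \<in> {v}} m)
    \<le> x ^ card {y \<in> half_edges n dn. fst y \<in> {v}}
      * real (card (perfect_matchings_on (half_edges n dn)))"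
    by (rule explore_weight_sum_le[OF finite_half_edges assms(2-6)])
  also have "\<dots> \<le> real (card (perfect_matchings_on (half_edges n dn)))"
    using assms(4,5) by (intro mult_left_le_one_le) (auto intro: power_le_one)
  finally show ?thesis
    by simp
qed

text \<open>On matchings where the component of \<open>v\<close> has \<open>L\<close> edges the exploration weight with
  \<open>g = w\<close> is exactly \<open>w ^ L\<close>; comparing with the expectation bound counts these matchings.\<close>

lemma card_matchings_component_edges_le:
  assumes ev: "even (\<Sum>i<n. dn i)" and w: "1 \<le> w" and x: "0 < x" "x \<le> 1"
    and drift: "drift_condition (half_edges n dn) x w (L + 1)"
  shows "real (card {m \<in> perfect_matchings n dn. card (component_edges n dn m v) = L}) * w ^ L
    \<le> real (card (perfect_matchings n dn))"
proof -
  let ?H = "half_edges n dn" and ?A = "{y \<in> half_edges n dn. fst y = v}"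
  let ?E = "{m \<in> perfect_matchings_on ?H. card (component_edges n dn m v) = L}"
  have weight: "explore_weight w w L L ?H ?A m = w ^ L" if m: "m \<in> ?E" for m
  proof -
    let ?R = "reach ?H ?A m"
    have mo: "matching_on ?H m"
      using m by (auto intro: matching_on_perfect_matching)
    have RH: "?R \<subseteq> ?H"
      using mo by (intro reach_subset) auto
    have fin: "finite ?R"
      using RH finite_half_edges finite_subset by blast
    have "card ?R = 2 * card ((\<lambda>h. {h, m h}) ` ?R)"
      using mo RH fin by (intro card_eq_twice_card_matched_pairs) (auto intro: reach_partner)
    then have cR: "card ?R = 2 * L"
      using m component_edges_eq_reach[of m n dn v] by simp
    have vc: "vertex_closed ?H ?A"
      unfolding vertex_closed_def by auto
    note eval = explore_weight_eval[OF finite_half_edges mo _ vc]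
    have "card (new_vertices ?H ?A m) \<le> L"
      \<comment> \<open>evaluation with the vacuous budget \<open>db = card (new_vertices ?H ?A m)\<close>\<close>
      using eval[where t = L and db = "card (new_vertices ?H ?A m)"] cR by auto
    then show ?thesis
      using eval[where t = L and db = L and g = w and w = w] cR by (simp add: power_add[symmetric])
  qed
  have "real (card ?E) * w ^ L = (\<Sum>m\<in>?E. explore_weight w w L L ?H ?A m)"
    using weight by simp
  also have "\<dots> \<le> (\<Sum>m\<in>perfect_matchings_on ?H. explore_weight w w L L ?H ?A m)"
    using w by (intro sum_mono2 finite_perfect_matchings_on finite_half_edges explore_weight_nonneg)
      auto
  also have "\<dots> \<le> real (card (perfect_matchings_on ?H))"
    using ev w x drift by (intro explore_weight_sum_from_vertex_le) auto
  finally show ?thesis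
    unfolding perfect_matchings_eq_on .
qed

lemma card_matchings_component_le:
  assumes ev: "even (\<Sum>i<n. dn i)" and w: "1 \<le> w" and x: "0 < x" "x \<le> 1"
    and drift: "drift_condition (half_edges n dn) x w k" and k: "1 \<le> k"
  shows "real (card {m \<in> perfect_matchings n dn. card (component n dn m v) = k}) * w ^ (k - 1)
    \<le> real (card (perfect_matchings n dn))"
proof -
  let ?H = "half_edges n dn" and ?A = "{y \<in> half_edges n dn. fst y = v}"
  let ?E = "{m \<in> perfect_matchings_on ?H. card (component n dn m v) = k}"
  let ?t = "card (half_edges n dn)"
  have weight: "explore_weight 1 w ?t (k - 1) ?H ?A m = w ^ (k - 1)" if m: "m \<in> ?E" for m
  proof -
    have mo: "matching_on ?H m"
      using m by (auto intro: matching_on_perfect_matching)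
    have RH: "reach ?H ?A m \<subseteq> ?H"
      using mo by (intro reach_subset) auto
    then have "card (reach ?H ?A m) \<le> ?t"
      by (intro card_mono finite_half_edges)
    moreover have "finite (component n dn m v)"
      using component_eq_reach[of m n dn v] m finite_subset[OF RH finite_half_edges] by auto
    then have "card (new_vertices ?H ?A m) = k - 1"
      using m new_vertices_from_vertex[of m n dn v] by (simp add: component_def)
    ultimately show ?thesis
      using explore_weight_eval[OF finite_half_edges mo, of ?A ?t "k - 1" 1 w]
      unfolding vertex_closed_def by auto
  qed
  have "real (card ?E) * w ^ (k - 1) = (\<Sum>m\<in>?E. explore_weight 1 w ?t (k - 1) ?H ?A m)"
    using weight by simp
  also have "\<dots> \<le> (\<Sum>m\<in>perfect_matchings_on ?H. explore_weight 1 w ?t (k - 1) ?H ?A m)"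
    using w by (intro sum_mono2 finite_perfect_matchings_on finite_half_edges explore_weight_nonneg)
      auto
  also have "\<dots> \<le> real (card (perfect_matchings_on ?H))"
    using ev w x drift k by (intro explore_weight_sum_from_vertex_le) auto
  finally show ?thesis
    unfolding perfect_matchings_eq_on .
qed

lemma prob_component_edges_le:
  assumes "1 \<le> n" "even (\<Sum>i<n. dn i)" "1 \<le> w" "0 < x" "x \<le> 1"
    and "drift_condition (half_edges n dn) x w (L + 1)"
  shows "measure_pmf.prob (cm_with_vertex n dn) {(m, v). card (component_edges n dn m v) = L}
    \<le> 1 / w ^ L"
  using assms by (intro prob_cm_with_vertex_le card_matchings_component_edges_le) auto

lemma prob_component_le:
  assumes "1 \<le> n" "even (\<Sum>i<n. dn i)" "1 \<le> w" "0 < x" "x \<le> 1"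
    and "drift_condition (half_edges n dn) x w k" "1 \<le> k"
  shows "measure_pmf.prob (cm_with_vertex n dn) {(m, v). card (component n dn m v) = k}
    \<le> 1 / w ^ (k - 1)"
  using assms by (intro prob_cm_with_vertex_le card_matchings_component_le) auto

section \<open>Degree statistics\<close>

definition degree_count :: "nat \<Rightarrow> (nat \<Rightarrow> nat) \<Rightarrow> nat \<Rightarrow> nat" where
  "degree_count n dn j = card {i. i < n \<and> dn i = j}"

definition degree_tail :: "nat \<Rightarrow> (nat \<Rightarrow> nat) \<Rightarrow> nat \<Rightarrow> real" where
  "degree_tail n dn T = (\<Sum>i | i < n \<and> T \<le> dn i. real (dn i))"

lemma sum_degrees_split:
  fixes f :: "nat \<Rightarrow> real"
  shows "(\<Sum>i<n. f (dn i)) =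
    (\<Sum>j<T. f j * real (degree_count n dn j)) + (\<Sum>i | i < n \<and> T \<le> dn i. f (dn i))"
proof -
  have "{..<n} = {i. i < n \<and> dn i < T} \<union> {i. i < n \<and> T \<le> dn i}"
    by auto
  then have "(\<Sum>i<n. f (dn i)) = (\<Sum>i\<in>{i. i < n \<and> dn i < T} \<union> {i. i < n \<and> T \<le> dn i}. f (dn i))"
    by simp
  also have "\<dots> = (\<Sum>i | i < n \<and> dn i < T. f (dn i)) + (\<Sum>i | i < n \<and> T \<le> dn i. f (dn i))"
    by (rule sum.union_disjoint) auto
  also have "(\<Sum>i | i < n \<and> dn i < T. f (dn i)) =
      (\<Sum>j<T. \<Sum>i\<in>{i\<in>{i. i < n \<and> dn i < T}. dn i = j}. f (dn i))"
    by (rule sum.group[symmetric]) auto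
  also have "\<dots> = (\<Sum>j<T. f j * real (degree_count n dn j))"
  proof (rule sum.cong[OF refl])
    fix j :: nat assume "j \<in> {..<T}"
    then have "{i\<in>{i. i < n \<and> dn i < T}. dn i = j} = {i. i < n \<and> dn i = j}"
      by auto
    then show "(\<Sum>i\<in>{i\<in>{i. i < n \<and> dn i < T}. dn i = j}. f (dn i)) = f j * real (degree_count n dn j)"
      unfolding degree_count_def by simp
  qed
  finally show ?thesis .
qed

lemma sum_degrees_eq:
  "(\<Sum>i<n. real (dn i)) = (\<Sum>j<T. real j * real (degree_count n dn j)) + degree_tail n dn T"
  using sum_degrees_split[of real] unfolding degree_tail_def .

lemma sum_degree_powers_le:
  fixes x :: real
  assumes "0 \<le> x" "x \<le> 1"
  shows "(\<Sum>y\<in>half_edges n dn. x ^ card {z\<in>half_edges n dn. fst z = fst y})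
    \<le> (\<Sum>j<T. real j * x ^ j * real (degree_count n dn j)) + degree_tail n dn T"
proof -
  have "(\<Sum>y\<in>half_edges n dn. x ^ card {z\<in>half_edges n dn. fst z = fst y})
      = (\<Sum>(i, k)\<in>Sigma {..<n} (\<lambda>i. {..<dn i}). x ^ card {z\<in>half_edges n dn. fst z = i})"
    by (simp add: half_edges_Sigma case_prod_beta)
  also have "\<dots> = (\<Sum>i<n. \<Sum>k<dn i. x ^ card {z\<in>half_edges n dn. fst z = i})"
    by (rule sum.Sigma[symmetric]) auto
  also have "\<dots> = (\<Sum>i<n. real (dn i) * x ^ dn i)"
    by (intro sum.cong) (auto simp: card_half_edges_vertex)
  also have "\<dots> = (\<Sum>j<T. real j * x ^ j * real (degree_count n dn j))
      + (\<Sum>i | i < n \<and> T \<le> dn i. real (dn i) * x ^ dn i)"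
    by (rule sum_degrees_split)
  also have "(\<Sum>i | i < n \<and> T \<le> dn i. real (dn i) * x ^ dn i) \<le> degree_tail n dn T"
    unfolding degree_tail_def using assms by (intro sum_mono mult_left_le power_le_one) auto
  finally show ?thesis by simp
qed

lemma card_half_edges_at_le:
  assumes "finite S"
  shows "real (card {y\<in>half_edges n dn. fst y \<in> S}) \<le> real (card S) * real T + degree_tail n dn T"
proof -
  have "real (card {y\<in>half_edges n dn. fst y \<in> S}) = (\<Sum>i\<in>S \<inter> {..<n}. real (dn i))"
    by (simp add: card_half_edges_at)
  also have "\<dots> \<le> (\<Sum>i\<in>S \<inter> {..<n}. real T + (if T \<le> dn i then real (dn i) else 0))"
    by (rule sum_mono) auto
  also have "\<dots> = real (card (S \<inter> {..<n})) * real T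
      + (\<Sum>i\<in>S \<inter> {..<n}. (if T \<le> dn i then real (dn i) else 0))"
    by (simp add: sum.distrib)
  also have "(\<Sum>i\<in>S \<inter> {..<n}. (if T \<le> dn i then real (dn i) else 0))
      = (\<Sum>i\<in>{i. i < n \<and> T \<le> dn i} \<inter> S. real (dn i))"
    by (simp add: sum.inter_filter[symmetric] Int_commute) (rule sum.cong; auto)
  also have "\<dots> \<le> degree_tail n dn T"
    unfolding degree_tail_def by (rule sum_mono2) auto
  also have "real (card (S \<inter> {..<n})) \<le> real (card S)"
    using assms by (simp add: card_mono)
  finally show ?thesis
    by (simp add: mult_right_mono)
qed

section \<open>The limiting degree distribution\<close>

lemma integrable_pmf_iff_summable:
  fixes D :: "nat pmf" and f :: "nat \<Rightarrow> real"
  shows "integrable (measure_pmf D) f \<longleftrightarrow> summable (\<lambda>j. \<bar>pmf D j * f j\<bar>)"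
proof -
  have "integrable (measure_pmf D) f \<longleftrightarrow> integrable (count_space UNIV) (\<lambda>j. pmf D j * f j)"
    unfolding measure_pmf_eq_density by (subst integrable_density) auto
  also have "\<dots> \<longleftrightarrow> summable (\<lambda>j. \<bar>pmf D j * f j\<bar>)"
    by (simp add: integrable_count_space_nat_iff)
  finally show ?thesis .
qed

lemma sums_pmf_expectation:
  fixes D :: "nat pmf" and f :: "nat \<Rightarrow> real"
  assumes "integrable (measure_pmf D) f"
  shows "(\<lambda>j. pmf D j * f j) sums measure_pmf.expectation D f"
proof -
  have "integrable (count_space UNIV) (\<lambda>j. pmf D j * f j)"
    using assms unfolding measure_pmf_eq_density by (subst (asm) integrable_density) auto
  moreover have "measure_pmf.expectation D f = (\<integral>j. pmf D j * f j \<partial>count_space UNIV)"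
    unfolding measure_pmf_eq_density by (subst integral_density) auto
  ultimately show ?thesis
    using sums_integral_count_space_nat by simp
qed

text \<open>Only the term \<open>j = 1\<close> of \<open>E[D(D - 2)]\<close> is negative.\<close>

lemma summable_abs_excess_moment:
  fixes D :: "nat pmf"
  assumes "\<And>T. (\<Sum>j<T. pmf D j * (real j * (real j - 2))) \<le> B"
  shows "summable (\<lambda>j. \<bar>pmf D j * (real j * (real j - 2))\<bar>)"
proof (rule summableI_nonneg_bounded[where x = "B + 2 * pmf D 1"])
  have abs_eq: "\<bar>pmf D j * (real j * (real j - 2))\<bar> =
      pmf D j * (real j * (real j - 2)) + (if j = 1 then 2 * pmf D 1 else 0)" for j
    by (cases j rule: num_matchings.cases) (auto simp: abs_mult)
  fix T :: nat
  have "(\<Sum>j<T. \<bar>pmf D j * (real j * (real j - 2))\<bar>) =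
      (\<Sum>j<T. pmf D j * (real j * (real j - 2))) + (\<Sum>j<T. if j = 1 then 2 * pmf D 1 else 0)"
    by (simp add: abs_eq sum.distrib)
  also have "\<dots> \<le> B + 2 * pmf D 1"
    using assms[of T] by (intro add_mono) (auto simp: sum.delta)
  finally show "(\<Sum>j<T. \<bar>pmf D j * (real j * (real j - 2))\<bar>) \<le> B + 2 * pmf D 1" .
qed simp

lemma truncated_excess_moment_pos:
  fixes D :: "nat pmf"
  assumes A5: "\<not> integrable (measure_pmf D) (\<lambda>k. real k * (real k - 2))
             \<or> measure_pmf.expectation D (\<lambda>k. real k * (real k - 2)) > 0"
  shows "\<exists>T. 0 < (\<Sum>j<T. pmf D j * (real j * (real j - 2)))"
proof (rule ccontr)
  assume "\<not> ?thesis"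
  then have le: "(\<Sum>j<T. pmf D j * (real j * (real j - 2))) \<le> 0" for T
    by (simp add: not_less)
  then have "integrable (measure_pmf D) (\<lambda>k. real k * (real k - 2))"
    unfolding integrable_pmf_iff_summable by (rule summable_abs_excess_moment)
  then have "(\<lambda>T. \<Sum>j<T. pmf D j * (real j * (real j - 2)))
      \<longlonglongrightarrow> measure_pmf.expectation D (\<lambda>k. real k * (real k - 2))"
    and "0 < measure_pmf.expectation D (\<lambda>k. real k * (real k - 2))"
    using sums_pmf_expectation A5 by (auto simp: sums_def)
  then show False
    using LIMSEQ_le_const2[of _ _ 0] le by force
qed

lemma one_minus_power_le:
  fixes y :: real
  assumes "0 \<le> y" "y \<le> 1"
  shows "(1 - y) ^ j \<le> 1 - real j * y + real j * (real j - 1) / 2 * y\<^sup>2"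
proof (induction j)
  case (Suc j)
  have "(1 - y) ^ Suc j \<le> (1 - y) * (1 - real j * y + real j * (real j - 1) / 2 * y\<^sup>2)"
    using Suc.IH assms by (simp add: mult_left_mono)
  also have "\<dots> = 1 - real (Suc j) * y + real (Suc j) * (real (Suc j) - 1) / 2 * y\<^sup>2
      - real j * (real j - 1) / 2 * y ^ 3"
    by (simp add: field_simps power2_eq_square power3_eq_cube)
  also have "\<dots> \<le> 1 - real (Suc j) * y + real (Suc j) * (real (Suc j) - 1) / 2 * y\<^sup>2"
  proof -
    have "0 \<le> real j * (real j - 1)"
      by (cases j) auto
    then show ?thesis
      using assms by simp
  qed
  finally show ?case .
qed simp

lemma power_gap_ge:
  fixes x :: real
  assumes x: "0 \<le> x" "x \<le> 1" and j: "j \<le> T"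
  shows "(1 - x) * (real j * (real j - 2) - real T ^ 3 * (1 - x)) \<le> real j * (x\<^sup>2 - x ^ j)"
proof -
  define y where "y = 1 - x"
  have y: "0 \<le> y" "y \<le> 1" "x = 1 - y"
    using x unfolding y_def by auto
  have cube: "real j * (real j * (real j - 1) / 2) \<le> real T ^ 3"
  proof -
    have "real j * (real j * (real j - 1) / 2) \<le> real j ^ 3"
      by (cases j) (auto simp: power3_eq_cube)
    also have "\<dots> \<le> real T ^ 3"
      using j by (simp add: power_mono)
    finally show ?thesis .
  qed
  have "x ^ j \<le> 1 - real j * y + real j * (real j - 1) / 2 * y\<^sup>2"
    unfolding y(3) using one_minus_power_le[OF y(1,2)] .
  moreover have "1 - 2 * y \<le> x\<^sup>2"
    unfolding y(3) by (simp add: power2_eq_square algebra_simps)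
  moreover have "(real j - 2) * y - real j * (real j - 1) / 2 * y\<^sup>2 =
      (1 - 2 * y) - (1 - real j * y + real j * (real j - 1) / 2 * y\<^sup>2)"
    by (simp add: algebra_simps)
  ultimately have gap: "real j * ((real j - 2) * y - real j * (real j - 1) / 2 * y\<^sup>2)
      \<le> real j * (x\<^sup>2 - x ^ j)"
    by (intro mult_left_mono) auto
  have "(1 - x) * (real j * (real j - 2) - real T ^ 3 * (1 - x))
      = real j * ((real j - 2) * y) - real T ^ 3 * y\<^sup>2"
    unfolding y_def by (simp add: power2_eq_square algebra_simps)
  also have "\<dots> \<le> real j * ((real j - 2) * y) - real j * (real j * (real j - 1) / 2) * y\<^sup>2"
    using cube by (intro diff_left_mono mult_right_mono) auto
  also have "\<dots> = real j * ((real j - 2) * y - real j * (real j - 1) / 2 * y\<^sup>2)"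
    by (simp add: algebra_simps)
  also note gap
  finally show ?thesis .
qed

lemma truncated_power_gap_ge:
  fixes D :: "nat pmf" and x :: real
  assumes x: "0 \<le> x" "x \<le> 1" and T: "2 \<le> T1" "T1 \<le> T"
  shows "(1 - x) * ((\<Sum>j<T1. pmf D j * (real j * (real j - 2))) - real T1 ^ 3 * (1 - x))
    \<le> (\<Sum>j<T. pmf D j * (real j * (x\<^sup>2 - x ^ j)))"
proof -
  have mass: "(\<Sum>j<T1. pmf D j) \<le> 1"
    using measure_measure_pmf_finite[of "{..<T1}" D] measure_pmf.prob_le_1[of D "{..<T1}"] by simp
  have "(1 - x) * ((\<Sum>j<T1. pmf D j * (real j * (real j - 2))) - real T1 ^ 3 * (1 - x))
      \<le> (1 - x) * ((\<Sum>j<T1. pmf D j * (real j * (real j - 2)))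
          - real T1 ^ 3 * (1 - x) * (\<Sum>j<T1. pmf D j))"
    using x mass by (intro mult_left_mono diff_left_mono mult_left_le) auto
  also have "\<dots> = (1 - x) * (\<Sum>j<T1. pmf D j * (real j * (real j - 2)))
      - ((1 - x) * real T1 ^ 3 * (1 - x)) * (\<Sum>j<T1. pmf D j)"
    by (simp add: algebra_simps)
  also have "\<dots> = (\<Sum>j<T1. (1 - x) * (pmf D j * (real j * (real j - 2)))
      - ((1 - x) * real T1 ^ 3 * (1 - x)) * pmf D j)"
    by (simp add: sum_subtractf sum_distrib_left)
  also have "\<dots> = (\<Sum>j<T1. pmf D j * ((1 - x) * (real j * (real j - 2) - real T1 ^ 3 * (1 - x))))"
    by (rule sum.cong) (simp_all add: algebra_simps)
  also have "\<dots> \<le> (\<Sum>j<T1. pmf D j * (real j * (x\<^sup>2 - x ^ j)))"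
    using x by (intro sum_mono mult_left_mono power_gap_ge) auto
  also have "\<dots> \<le> (\<Sum>j<T. pmf D j * (real j * (x\<^sup>2 - x ^ j)))"
  proof (rule sum_mono2)
    show "0 \<le> pmf D j * (real j * (x\<^sup>2 - x ^ j))" if "j \<in> {..<T} - {..<T1}" for j
      using that T x by (auto intro!: mult_nonneg_nonneg power_decreasing)
  qed (use T in auto)
  finally show ?thesis .
qed

text \<open>Assumption (A5) in the form used by the drift estimate: for some \<open>x < 1\<close> the truncated
  size-biased generating function \<open>E[D x^D]\<close> stays a fixed amount below \<open>x\<^sup>2 E[D]\<close>.\<close>

lemma exists_contraction:
  fixes D :: "nat pmf"
  assumes mean: "integrable (measure_pmf D) real"
    and A5: "\<not> integrable (measure_pmf D) (\<lambda>k. real k * (real k - 2))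
             \<or> measure_pmf.expectation D (\<lambda>k. real k * (real k - 2)) > 0"
  shows "\<exists>x \<delta> T1. 0 < x \<and> x < 1 \<and> 0 < \<delta> \<and> (\<forall>T\<ge>T1.
    (\<Sum>j<T. real j * x ^ j * pmf D j) \<le> x\<^sup>2 * (measure_pmf.expectation D real - \<delta>))"
proof -
  obtain T1 where c0: "0 < (\<Sum>j<T1. pmf D j * (real j * (real j - 2)))"
    using truncated_excess_moment_pos[OF A5] by blast
  define c where "c = (\<Sum>j<T1. pmf D j * (real j * (real j - 2)))"
  have T1: "2 \<le> T1"
    using c0 by (cases T1 rule: num_matchings.cases) auto
  define \<eta> where "\<eta> = min (1 / 2) (c / (2 * (real T1 ^ 3 + 1)))"
  have den: "0 < 2 * (real T1 ^ 3 + 1)"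
    by (simp add: add_nonneg_pos)
  have \<eta>: "0 < \<eta>" "\<eta> \<le> 1 / 2"
    unfolding \<eta>_def using c0 den
    by (simp_all only: c_def min_less_iff_conj divide_pos_pos min.cobounded1)
  have "\<eta> \<le> c / (2 * (real T1 ^ 3 + 1))"
    unfolding \<eta>_def by simp
  then have "\<eta> * (2 * (real T1 ^ 3 + 1)) \<le> c"
    using den by (simp add: pos_le_divide_eq)
  then have \<eta>T1: "real T1 ^ 3 * \<eta> \<le> c / 2"
    using \<eta> by (simp add: algebra_simps)
  define x where "x = 1 - \<eta>"
  have x: "0 < x" "x < 1"
    using \<eta> unfolding x_def by auto
  define \<delta> where "\<delta> = \<eta> * c / 2 / x\<^sup>2"
  have "(\<Sum>j<T. real j * x ^ j * pmf D j) \<le> x\<^sup>2 * (measure_pmf.expectation D real - \<delta>)"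
    if T: "T1 \<le> T" for T
  proof -
    have "\<eta> * (c / 2) \<le> (1 - x) * (c - real T1 ^ 3 * (1 - x))"
      using \<eta> \<eta>T1 unfolding x_def by (simp add: mult_left_mono)
    also have "\<dots> \<le> (\<Sum>j<T. pmf D j * (real j * (x\<^sup>2 - x ^ j)))"
      unfolding c_def using x T1 T by (intro truncated_power_gap_ge) auto
    also have "\<dots> = x\<^sup>2 * (\<Sum>j<T. pmf D j * real j) - (\<Sum>j<T. real j * x ^ j * pmf D j)"
      by (simp add: sum_distrib_left sum_subtractf algebra_simps)
    finally have gap: "(\<Sum>j<T. real j * x ^ j * pmf D j) \<le> x\<^sup>2 * (\<Sum>j<T. pmf D j * real j) - \<eta> * c / 2"
      by simp
    have "(\<Sum>j<T. pmf D j * real j) \<le> measure_pmf.expectation D real"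
    proof -
      note sums = sums_pmf_expectation[OF mean]
      have "(\<Sum>j<T. pmf D j * real j) \<le> (\<Sum>j. pmf D j * real j)"
        by (rule sum_le_suminf) (use sums in \<open>auto simp: sums_iff\<close>)
      then show ?thesis
        using sums by (simp add: sums_iff)
    qed
    then have "x\<^sup>2 * (\<Sum>j<T. pmf D j * real j) \<le> x\<^sup>2 * measure_pmf.expectation D real"
      by (intro mult_left_mono) auto
    moreover have "x\<^sup>2 * (measure_pmf.expectation D real - \<delta>)
        = x\<^sup>2 * measure_pmf.expectation D real - \<eta> * c / 2"
      unfolding \<delta>_def using x by (simp add: right_diff_distrib)
    ultimately show ?thesis
      using gap by linarith
  qed
  moreover have "0 < \<delta>"
    unfolding \<delta>_def using \<eta> c0 x by (simp add: c_def)
  ultimately show ?thesis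
    using x by blast
qed

section \<open>The drift condition for the configuration model\<close>

lemma drift_condition_of_degree_bounds:
  fixes x \<delta> \<mu> \<tau> :: real
  assumes x: "0 < x" "x \<le> 1" and \<delta>: "0 < \<delta>" "\<delta> \<le> \<mu>" and \<tau>: "\<tau> = x\<^sup>2 * \<delta> / 32"
    and T: "0 < T" and n: "0 < n" "1 / \<tau> \<le> real n" "2 * real T / \<tau> \<le> real n"
    and small: "(\<Sum>j<T. real j * x ^ j * real (degree_count n dn j)) / real n < x\<^sup>2 * (\<mu> - \<delta>) + \<tau>"
    and head: "\<mu> - 2 * \<tau> < (\<Sum>j<T. real j * real (degree_count n dn j)) / real n"
    and total: "\<mu> - \<tau> < (\<Sum>i<n. real (dn i)) / real n" "(\<Sum>i<n. real (dn i)) / real n < \<mu> + \<tau>"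
    and kz: "real kz \<le> \<tau> / (2 * real T) * real n + 1"
  shows "drift_condition (half_edges n dn) x ((\<mu> - \<delta> / 4) / (\<mu> - 3 * \<delta> / 4)) kz"
proof -
  have \<tau>0: "0 < \<tau>"
    unfolding \<tau> using x \<delta> by simp
  have rn: "0 < real n"
    using n by simp
  have big: "1 \<le> \<tau> * real n" "2 * real T \<le> \<tau> * real n"
    using n(2,3) \<tau>0 by (simp_all add: field_simps)
  have small': "(\<Sum>j<T. real j * x ^ j * real (degree_count n dn j)) \<le> real n * (x\<^sup>2 * (\<mu> - \<delta>) + \<tau>)"
    using small rn by (simp add: field_simps)
  have total': "real n * (\<mu> - \<tau>) \<le> (\<Sum>i<n. real (dn i))" "(\<Sum>i<n. real (dn i)) \<le> real n * (\<mu> + \<tau>)"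
    using total rn by (simp_all add: field_simps)
  have tail: "degree_tail n dn T \<le> 3 * \<tau> * real n"
    using sum_degrees_eq[where n = n and dn = dn and T = T] total'(2) head rn by (simp add: field_simps)
  define K where "K = 4 * \<tau> * real n"
  have top: "real (card {y\<in>half_edges n dn. fst y \<in> S}) \<le> K" if "finite S" "card S \<le> kz" for S
  proof -
    have "real (card S) * real T \<le> (\<tau> / (2 * real T) * real n + 1) * real T"
      using that kz by (intro mult_right_mono) auto
    also have "\<dots> = \<tau> * real n / 2 + real T"
      using T by (simp add: field_simps)
    finally show ?thesis
      using card_half_edges_at_le[OF that(1), where n = n and dn = dn and T = T] tail big
      unfolding K_def by linarith
  qed
  have degrees: "(\<Sum>y\<in>half_edges n dn. x ^ card {z\<in>half_edges n dn. fst z = fst y})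
      \<le> real n * (x\<^sup>2 * (\<mu> - \<delta>) + 4 * \<tau>)"
    using sum_degree_powers_le[where x = x and n = n and dn = dn and T = T] x small' tail
    by (simp add: algebra_simps)
  have den: "0 < \<mu> - 3 * \<delta> / 4"
    using \<delta> by simp
  define w where "w = (\<mu> - \<delta> / 4) / (\<mu> - 3 * \<delta> / 4)"
  have w: "0 \<le> w / x\<^sup>2"
    unfolding w_def using \<delta> den by simp
  have "w * K / x\<^sup>2 + w * (\<Sum>y\<in>half_edges n dn. x ^ card {z\<in>half_edges n dn. fst z = fst y}) / x\<^sup>2
      = w / x\<^sup>2 * (K + (\<Sum>y\<in>half_edges n dn. x ^ card {z\<in>half_edges n dn. fst z = fst y}))"
    by (simp add: add_divide_distrib algebra_simps)
  also have "\<dots> \<le> w / x\<^sup>2 * (real n * (x\<^sup>2 * (\<mu> - 3 * \<delta> / 4)))"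
    using degrees w unfolding K_def \<tau> by (intro mult_left_mono) (auto simp: algebra_simps)
  also have "\<dots> = real n * (\<mu> - \<delta> / 4)"
    unfolding w_def using den x by (simp add: field_simps)
  also have "\<dots> \<le> real (card (half_edges n dn)) - K - 1"
  proof -
    have "x\<^sup>2 \<le> 1"
      using x by (simp add: power_le_one)
    then have "6 * \<tau> \<le> \<delta> / 4"
      unfolding \<tau> using \<delta> by simp
    then have "real n * (\<mu> - \<delta> / 4) \<le> real n * (\<mu> - 6 * \<tau>)"
      using rn by (intro mult_left_mono) auto
    then show ?thesis
      using total'(1) big(1) unfolding K_def card_half_edges by (simp add: algebra_simps)
  qed
  finally show ?thesis
    unfolding drift_condition_def w_def[symmetric] using top by blast
qed

lemma tendsto_degree_count_sum:
  fixes d :: "nat \<Rightarrow> nat \<Rightarrow> nat" and f :: "nat \<Rightarrow> real"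
  assumes A1: "\<And>k. (\<lambda>n. real (card {i. i < n \<and> d n i = k}) / real n) \<longlonglongrightarrow> pmf D k"
  shows "(\<lambda>n. (\<Sum>j<T. f j * real (degree_count n (d n) j)) / real n) \<longlonglongrightarrow> (\<Sum>j<T. f j * pmf D j)"
proof -
  have "(\<lambda>n. \<Sum>j<T. f j * (real (degree_count n (d n) j) / real n)) \<longlonglongrightarrow> (\<Sum>j<T. f j * pmf D j)"
    unfolding degree_count_def by (intro tendsto_sum tendsto_mult_left A1)
  then show ?thesis
    by (simp add: sum_divide_distrib)
qed

lemma eventually_drift_condition:
  fixes d :: "nat \<Rightarrow> nat \<Rightarrow> nat" and D :: "nat pmf"
  assumes A1: "\<And>k. (\<lambda>n. real (card {i. i < n \<and> d n i = k}) / real n) \<longlonglongrightarrow> pmf D k"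
    and A1_mean: "integrable (measure_pmf D) real"
    and A1_pos: "measure_pmf.expectation D real > 0"
    and A2: "(\<lambda>n. (\<Sum>i<n. real (d n i)) / real n) \<longlonglongrightarrow> measure_pmf.expectation D real"
    and A5: "\<not> integrable (measure_pmf D) (\<lambda>k. real k * (real k - 2))
             \<or> measure_pmf.expectation D (\<lambda>k. real k * (real k - 2)) > 0"
  shows "\<exists>x w \<epsilon>. 0 < x \<and> x \<le> 1 \<and> 1 < w \<and> 0 < \<epsilon> \<and> (\<forall>\<^sub>F n in sequentially.
    \<forall>kz. real kz \<le> \<epsilon> * real n + 1 \<longrightarrow> drift_condition (half_edges n (d n)) x w kz)"
proof -
  define \<mu> where "\<mu> = measure_pmf.expectation D real"
  obtain x \<delta> T1 where x: "0 < x" "x < 1" and \<delta>: "0 < \<delta>"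
    and contraction: "\<And>T. T1 \<le> T \<Longrightarrow> (\<Sum>j<T. real j * x ^ j * pmf D j) \<le> x\<^sup>2 * (\<mu> - \<delta>)"
    using exists_contraction[OF A1_mean A5] unfolding \<mu>_def by blast
  have "0 \<le> (\<Sum>j<T1. real j * x ^ j * pmf D j)"
    using x by (intro sum_nonneg) auto
  then have "0 \<le> x\<^sup>2 * (\<mu> - \<delta>)"
    using contraction[of T1] by simp
  then have \<delta>\<mu>: "\<delta> \<le> \<mu>"
    using x by (simp add: zero_le_mult_iff)
  define \<tau> where "\<tau> = x\<^sup>2 * \<delta> / 32"
  have \<tau>: "0 < \<tau>"
    unfolding \<tau>_def using x \<delta> by simp
  have "(\<lambda>T. \<Sum>j<T. real j * pmf D j) \<longlonglongrightarrow> \<mu>"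
    using sums_pmf_expectation[OF A1_mean] unfolding \<mu>_def sums_def by (simp add: mult.commute)
  then obtain T0 where T0: "\<And>T. T0 \<le> T \<Longrightarrow> \<mu> - \<tau> < (\<Sum>j<T. real j * pmf D j)"
    using order_tendstoD(1)[of _ \<mu> sequentially "\<mu> - \<tau>"] \<tau> unfolding eventually_sequentially by auto
  define T where "T = max T1 (max T0 1)"
  have T: "T1 \<le> T" "T0 \<le> T" "0 < T"
    unfolding T_def by auto
  have "\<forall>\<^sub>F n in sequentially.
      (\<Sum>j<T. real j * x ^ j * real (degree_count n (d n) j)) / real n < x\<^sup>2 * (\<mu> - \<delta>) + \<tau> \<and>
      \<mu> - 2 * \<tau> < (\<Sum>j<T. real j * real (degree_count n (d n) j)) / real n \<and>
      \<mu> - \<tau> < (\<Sum>i<n. real (d n i)) / real n \<and> (\<Sum>i<n. real (d n i)) / real n < \<mu> + \<tau> \<and>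
      max 1 (max (1 / \<tau>) (2 * real T / \<tau>)) \<le> real n"
  proof (intro eventually_conj)
    show "\<forall>\<^sub>F n in sequentially.
        (\<Sum>j<T. real j * x ^ j * real (degree_count n (d n) j)) / real n < x\<^sup>2 * (\<mu> - \<delta>) + \<tau>"
      using contraction[OF T(1)] \<tau>
      by (intro order_tendstoD(2)[OF tendsto_degree_count_sum[OF A1]]) auto
    show "\<forall>\<^sub>F n in sequentially. \<mu> - 2 * \<tau> < (\<Sum>j<T. real j * real (degree_count n (d n) j)) / real n"
      using T0[OF T(2)] \<tau>
      by (intro order_tendstoD(1)[OF tendsto_degree_count_sum[OF A1]]) auto
    show "\<forall>\<^sub>F n in sequentially. \<mu> - \<tau> < (\<Sum>i<n. real (d n i)) / real n"
      "\<forall>\<^sub>F n in sequentially. (\<Sum>i<n. real (d n i)) / real n < \<mu> + \<tau>"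
      using A2 \<tau> unfolding \<mu>_def[symmetric] by (auto intro: order_tendstoD)
    show "\<forall>\<^sub>F n in sequentially. max 1 (max (1 / \<tau>) (2 * real T / \<tau>)) \<le> real n"
      using filterlim_real_sequentially unfolding filterlim_at_top by blast
  qed
  then have "\<forall>\<^sub>F n in sequentially. \<forall>kz. real kz \<le> \<tau> / (2 * real T) * real n + 1 \<longrightarrow>
      drift_condition (half_edges n (d n)) x ((\<mu> - \<delta> / 4) / (\<mu> - 3 * \<delta> / 4)) kz"
  proof (rule eventually_mono, safe)
    fix n kz
    assume "max 1 (max (1 / \<tau>) (2 * real T / \<tau>)) \<le> real n"
    then have n: "0 < n" "1 / \<tau> \<le> real n" "2 * real T / \<tau> \<le> real n"
      by auto
    assume bounds:
      "(\<Sum>j<T. real j * x ^ j * real (degree_count n (d n) j)) / real n < x\<^sup>2 * (\<mu> - \<delta>) + \<tau>"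
      "\<mu> - 2 * \<tau> < (\<Sum>j<T. real j * real (degree_count n (d n) j)) / real n"
      "\<mu> - \<tau> < (\<Sum>i<n. real (d n i)) / real n" "(\<Sum>i<n. real (d n i)) / real n < \<mu> + \<tau>"
      and kz: "real kz \<le> \<tau> / (2 * real T) * real n + 1"
    show "drift_condition (half_edges n (d n)) x ((\<mu> - \<delta> / 4) / (\<mu> - 3 * \<delta> / 4)) kz"
      by (rule drift_condition_of_degree_bounds[OF x(1) _ \<delta> \<delta>\<mu> \<tau>_def T(3) n bounds kz])
        (use x in simp)
  qed
  moreover have "1 < (\<mu> - \<delta> / 4) / (\<mu> - 3 * \<delta> / 4)"
    using \<delta> \<delta>\<mu> by (simp add: field_simps)
  moreover have "0 < \<tau> / (2 * real T)"
    using \<tau> T by simp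
  ultimately show ?thesis
    using x by (intro exI[of _ x] exI[of _ "(\<mu> - \<delta> / 4) / (\<mu> - 3 * \<delta> / 4)"]
      exI[of _ "\<tau> / (2 * real T)"]) auto
qed

lemma exponential_tail_of_geometric_tail:
  fixes P :: "nat \<Rightarrow> nat \<Rightarrow> real" and w \<epsilon> :: real
  assumes w: "1 < w" and \<epsilon>: "0 \<le> \<epsilon>" and le1: "\<And>n l. P n l \<le> 1"
    and geometric: "\<And>n l. N \<le> n \<Longrightarrow> 2 \<le> l \<Longrightarrow> real l \<le> \<epsilon> * real n \<Longrightarrow> P n l \<le> w / w ^ l"
    and l: "real l \<le> \<epsilon> * real n"
  shows "P n l \<le> exp (ln w * (\<epsilon> * real N + 2)) * exp (- ln w * real l)"
proof -
  have C: "exp (ln w * (\<epsilon> * real N + 2)) * exp (- ln w * real l)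
      = exp (ln w * (\<epsilon> * real N + 2 - real l))"
    by (simp add: exp_add[symmetric] algebra_simps)
  show ?thesis
  proof (cases "N \<le> n \<and> 2 \<le> l")
    case True
    have "w ^ l = exp (real l * ln w)"
      using w by (simp add: exp_of_nat_mult)
    then have "w / w ^ l = exp (ln w * (1 - real l))"
      using w by (simp add: exp_diff algebra_simps)
    also have "\<dots> \<le> exp (ln w * (\<epsilon> * real N + 2 - real l))"
      using w \<epsilon> by (intro exp_mono mult_left_mono) auto
    finally show ?thesis
      unfolding C using geometric[of n l] True l by simp
  next
    case False
    have "real l \<le> \<epsilon> * real N + 2"
    proof (cases "N \<le> n")
      case False
      then have "\<epsilon> * real n \<le> \<epsilon> * real N"
        using \<epsilon> by (intro mult_left_mono) auto
      then show ?thesis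
        using l \<epsilon> by linarith
    next
      case True
      then have "real l \<le> 2"
        using False by simp
      moreover have "0 \<le> \<epsilon> * real N"
        using \<epsilon> by simp
      ultimately show ?thesis
        by linarith
    qed
    then have "1 \<le> exp (ln w * (\<epsilon> * real N + 2 - real l))"
      using w by simp
    then show ?thesis
      unfolding C using le1[of n l] by linarith
  qed
qed

lemma exponential_tails_of_geometric_tails:
  fixes P Q :: "nat \<Rightarrow> nat \<Rightarrow> real" and w \<epsilon> :: real
  assumes w: "1 < w" and \<epsilon>: "0 < \<epsilon>" and "\<And>n l. P n l \<le> 1" "\<And>n k. Q n k \<le> 1"
    and "\<And>n l. N \<le> n \<Longrightarrow> 2 \<le> l \<Longrightarrow> real l \<le> \<epsilon> * real n \<Longrightarrow> P n l \<le> w / w ^ l"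
    and "\<And>n k. N \<le> n \<Longrightarrow> 2 \<le> k \<Longrightarrow> real k \<le> \<epsilon> * real n \<Longrightarrow> Q n k \<le> w / w ^ k"
  shows "\<exists>c::real > 0. \<exists>\<epsilon>::real > 0. \<exists>C::real. \<forall>n \<ge> 1.
           (\<forall>l::nat. real l \<le> \<epsilon> * real n \<longrightarrow> P n l \<le> C * exp (- c * real l))
         \<and> (\<forall>k::nat. 1 \<le> k \<and> real k \<le> \<epsilon> * real n \<longrightarrow> Q n k \<le> C * exp (- c * real k))"
proof -
  have "0 < ln w" "0 \<le> \<epsilon>"
    using w \<epsilon> by auto
  with assms show ?thesis
    by (intro exI[of _ "ln w"] conjI exI[of _ \<epsilon>] exI[of _ "exp (ln w * (\<epsilon> * real N + 2))"] allI impI)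
      (blast intro: exponential_tail_of_geometric_tail)+
qed

theorem lemma9p4:
  fixes d :: "nat \<Rightarrow> nat \<Rightarrow> nat" and D :: "nat pmf"
  assumes even_sum: "\<And>n. n \<ge> 1 \<Longrightarrow> even (\<Sum>i<n. d n i)"
    and A1: "\<And>k. (\<lambda>n. real (card {i. i < n \<and> d n i = k}) / real n) \<longlonglongrightarrow> pmf D k"
    and A1_mean: "integrable (measure_pmf D) real"
    and A1_pos: "measure_pmf.expectation D real > 0"
    and A2: "(\<lambda>n. (\<Sum>i<n. real (d n i)) / real n) \<longlonglongrightarrow> measure_pmf.expectation D real"
    and A5: "\<not> integrable (measure_pmf D) (\<lambda>k. real k * (real k - 2))
             \<or> measure_pmf.expectation D (\<lambda>k. real k * (real k - 2)) > 0"
  shows "\<exists>c::real > 0. \<exists>\<epsilon>::real > 0. \<exists>C::real. \<forall>n \<ge> 1.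
           (\<forall>l::nat. real l \<le> \<epsilon> * real n \<longrightarrow>
              measure_pmf.prob (cm_with_vertex n (d n))
                {(m, v). card (component_edges n (d n) m v) = l} \<le> C * exp (- c * real l))
         \<and> (\<forall>k::nat. 1 \<le> k \<and> real k \<le> \<epsilon> * real n \<longrightarrow>
              measure_pmf.prob (cm_with_vertex n (d n))
                {(m, v). card (component n (d n) m v) = k} \<le> C * exp (- c * real k))"
proof -
  obtain x w \<epsilon> where x: "0 < x" "x \<le> 1" and w: "1 < w" and \<epsilon>: "0 < \<epsilon>"
    and "\<forall>\<^sub>F n in sequentially.
      \<forall>kz. real kz \<le> \<epsilon> * real n + 1 \<longrightarrow> drift_condition (half_edges n (d n)) x w kz"
    using eventually_drift_condition[OF A1 A1_mean A1_pos A2 A5] by blast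
  then obtain N where N: "1 \<le> N"
    and drift: "\<And>n kz. N \<le> n \<Longrightarrow> real kz \<le> \<epsilon> * real n + 1 \<Longrightarrow>
      drift_condition (half_edges n (d n)) x w kz"
    unfolding eventually_sequentially by (metis le_trans max.cobounded1 max.cobounded2)
  have edges: "measure_pmf.prob (cm_with_vertex n (d n))
      {(m, v). card (component_edges n (d n) m v) = l} \<le> w / w ^ l"
    if "N \<le> n" "real l \<le> \<epsilon> * real n" for n l
  proof -
    have "measure_pmf.prob (cm_with_vertex n (d n))
        {(m, v). card (component_edges n (d n) m v) = l} \<le> 1 / w ^ l"
      using that N even_sum x w drift[of n "l + 1"] by (intro prob_component_edges_le) auto
    also have "\<dots> \<le> w / w ^ l"
      using w by (intro divide_right_mono) auto
    finally show ?thesis .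
  qed
  have vertices: "measure_pmf.prob (cm_with_vertex n (d n))
      {(m, v). card (component n (d n) m v) = k} \<le> w / w ^ k"
    if "N \<le> n" "2 \<le> k" "real k \<le> \<epsilon> * real n" for n k
    using that N even_sum x w drift[of n k] prob_component_le[of n "d n" w x k]
    by (cases k) auto
  show ?thesis
    by (rule exponential_tails_of_geometric_tails[OF w \<epsilon> measure_pmf.prob_le_1
          measure_pmf.prob_le_1 edges vertices])
qed

end
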